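(* Let $V$ be a separable Banach space, $\alpha,\beta\in(0,1)$ with $\alpha(1+\beta)>1$, and $A\in C^\alpha_tC^{1+\beta}_V$. Then for any $x_0\in V$ there exists a unique global solution on $[0,T]$ to the YDE associated to $(x_0,A)$, i.e. $x_t=x_0+\int_0^tA(\mathrm{d} s,x_s)$ for all $t\in[0,T]$.
   Context: Fix $T>0$. For a path $f:[0,T]\to E$ write $f_{s,t}=f_t-f_s$, $\llbracket f\rrbracket_\gamma=\sup_{s<t}\|f_{s,t}\|_E/|t-s|^\gamma$, $\|f\|_\gamma=\sup_t\|f_t\|_E+\llbracket f\rrbracket_\gamma$, $C^\gamma_tE$ the paths with $\|f\|_\gamma<\infty$. For $g:V\to W$, $\|g\|_\beta=\sup_{x\ne y}\|g(x)-g(y)\|_W/\|x-y\|_V^\beta+\sup_x\|g(x)\|_W$. Fields $A:[0,T]\times V\to W$ satisfy $A(0,\cdot)=0$, $A_{s,t}(x):=A(t,x)-A(s,x)$; $A\in C^\alpha_tC^\beta_{V,W}$ iff $\|A\|_{\alpha,\beta}=\sup_{s<t}\|A_{s,t}\|_\beta/|t-s|^\alpha<\infty$; $C^\alpha_tC^\beta_V:=C^\alpha_tC^\beta_{V,V}$. $A\in C^\alpha_tC^{1+\beta}_{V}$ means $A\in C^\alpha_tC^\beta_V$, $A(t,\cdot)$ is Fréchet differentiable for all $t$, and $DA\in C^\alpha_tC^\beta_{V,\mathcal L(V;V)}$; $\|A\|_{\alpha,1+\beta}=\|A\|_{\alpha,\beta}+\|DA\|_{\alpha,\beta}$. For $x\in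 C^\gamma_tV$ with $\alpha+\beta\gamma>1$, $\int_s^tA(\mathrm{d} r,x_r):=\lim_{|\Pi|\to0}\sum_iA_{t_i,t_{i+1}}(x_{t_i})$ (limit over partitions of $[s,t]$, exists and is partition-independent). A solution to the YDE associated to $(x_0,A)$ on $[0,T]$ is $x\in C^\gamma([0,T];V)$, for some $\gamma$ with $\alpha+\beta\gamma>1$, with $x_t=x_0+\int_0^tA(\mathrm{d} s,x_s)$ for all $t$. *)

theory Defs
  imports "HOL-Analysis.Analysis"
begin

definition separable_space :: "'a::metric_space itself \<Rightarrow> bool" where
  "separable_space _ \<longleftrightarrow> (\<exists>D::'a set. countable D \<and> closure D = UNIV)"

definition holder_path :: "real \<Rightarrow> real \<Rightarrow> (real \<Rightarrow> 'v::real_normed_vector) \<Rightarrow> bool" where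
  "holder_path T \<gamma> f \<longleftrightarrow> (\<exists>K. (\<forall>t\<in>{0..T}. norm (f t) \<le> K) \<and>
      (\<forall>s\<in>{0..T}. \<forall>t\<in>{0..T}. s < t \<longrightarrow> norm (f t - f s) \<le> K * (t - s) powr \<gamma>))"

definition field_holder :: "real \<Rightarrow> real \<Rightarrow> real \<Rightarrow> (real \<Rightarrow> 'v::real_normed_vector \<Rightarrow> 'w::real_normed_vector) \<Rightarrow> bool" where
  "field_holder T \<alpha> \<beta> A \<longleftrightarrow> (\<exists>K. \<forall>s\<in>{0..T}. \<forall>t\<in>{0..T}. s < t \<longrightarrow>
      (\<forall>x y. x \<noteq> y \<longrightarrow> norm ((A t x - A s x) - (A t y - A s y)) \<le> K * (t - s) powr \<alpha> * norm (x - y) powr \<beta>) \<and>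
      (\<forall>x. norm (A t x - A s x) \<le> K * (t - s) powr \<alpha>))"

text \<open>A in C^alpha_t C^{1+beta}_V on [0,T] (including the standing assumption A(0,.) = 0).\<close>
definition field_holder_1 :: "real \<Rightarrow> real \<Rightarrow> real \<Rightarrow> (real \<Rightarrow> 'v::real_normed_vector \<Rightarrow> 'v) \<Rightarrow> bool" where
  "field_holder_1 T \<alpha> \<beta> A \<longleftrightarrow> (\<forall>x. A 0 x = 0) \<and> field_holder T \<alpha> \<beta> A \<and>
     (\<exists>DA :: real \<Rightarrow> 'v \<Rightarrow> ('v \<Rightarrow>\<^sub>L 'v).
        (\<forall>t\<in>{0..T}. \<forall>x. (A t has_derivative blinfun_apply (DA t x)) (at x)) \<and>
        field_holder T \<alpha> \<beta> DA)"

definition has_young_integral ::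
  "(real \<Rightarrow> 'v \<Rightarrow> 'w::real_normed_vector) \<Rightarrow> (real \<Rightarrow> 'v) \<Rightarrow> real \<Rightarrow> real \<Rightarrow> 'w \<Rightarrow> bool" where
  "has_young_integral A x s t I \<longleftrightarrow> (\<forall>\<epsilon>>0. \<exists>\<delta>>0. \<forall>(n::nat) (p::nat \<Rightarrow> real).
      p 0 = s \<and> p n = t \<and> (\<forall>i<n. p i < p (Suc i) \<and> p (Suc i) - p i < \<delta>) \<longrightarrow>
      norm ((\<Sum>i<n. A (p (Suc i)) (x (p i)) - A (p i) (x (p i))) - I) < \<epsilon>)"

definition YDE_solution ::
  "real \<Rightarrow> real \<Rightarrow> real \<Rightarrow> (real \<Rightarrow> 'v::real_normed_vector \<Rightarrow> 'v) \<Rightarrow> 'v \<Rightarrow> (real \<Rightarrow> 'v) \<Rightarrow> bool" where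
  "YDE_solution T \<alpha> \<beta> A x0 x \<longleftrightarrow>
     (\<exists>\<gamma>. \<alpha> + \<beta> * \<gamma> > 1 \<and> holder_path T \<gamma> x) \<and>
     (\<forall>t\<in>{0..T}. has_young_integral A x 0 t (x t - x0))"

end

theory Submission
  imports Defs
begin

text \<open>A germ \<open>X\<close> whose defect \<open>X p r - X p q - X q r\<close> is \<open>O((r - p) powr \<theta>)\<close> with \<open>\<theta> > 1\<close>
  has partition sums that converge as the mesh tends to zero (sewing lemma): removing the two
  points next to the midpoint and recursing on both halves shows that every partition sum over
  \<open>[s, t]\<close> lies within \<open>C (t - s) powr \<theta>\<close> of \<open>X s t\<close>. The Young integral of \<open>A\<close> along an
  \<open>\<alpha>\<close>-Hoelder path \<open>x\<close> is the sewing of the germ \<open>A t (x s) - A s (x s)\<close>. Since \<open>A\<close> is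
  \<open>C\<^sup>1\<^sup>+\<^sup>\<beta>\<close> in space, the germ of the difference of two such integrals sews with exponent
  \<open>\<alpha> (1 + \<beta>) > 1\<close>, so on short intervals the Picard map \<open>x \<mapsto> x0 + \<integral> A(dr, x r)\<close>
  preserves a ball of \<open>\<alpha>\<close>-Hoelder paths and halves Hoelder distances. Its iterates converge to a
  local solution in Davie's sense, local solutions glue to a global one, and the same
  contraction estimate forces two solutions to agree on one short interval after the other.\<close>

section \<open>Partitions of an interval\<close>

text \<open>A partition of \<open>[s, t]\<close> is represented by its finite set of points, so that a common
  refinement of two partitions is just their union.\<close>

definition interval_partition :: "real \<Rightarrow> real \<Rightarrow> real set \<Rightarrow> bool" where
  "interval_partition s t F \<longleftrightarrow> finite F \<and> F \<subseteq> {s..t} \<and> s \<in> F \<and> t \<in> F"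

definition next_point :: "real set \<Rightarrow> real \<Rightarrow> real" where
  "next_point F u = Min {v\<in>F. u < v}"

definition partition_sum :: "(real \<Rightarrow> real \<Rightarrow> 'a::real_normed_vector) \<Rightarrow> real set \<Rightarrow> 'a" where
  "partition_sum X F = (\<Sum>u\<in>{u\<in>F. u < Max F}. X u (next_point F u))"

definition mesh_le :: "real \<Rightarrow> real set \<Rightarrow> bool" where
  "mesh_le d F \<longleftrightarrow> (\<forall>u\<in>F. u < Max F \<longrightarrow> next_point F u - u \<le> d)"

lemma interval_partition_Max: "interval_partition s t F \<Longrightarrow> Max F = t"
  unfolding interval_partition_def by (meson Max_eqI atLeastAtMost_iff subsetD)

lemma interval_partition_le: "interval_partition s t F \<Longrightarrow> s \<le> t"
  unfolding interval_partition_def by auto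

lemma interval_partition_restrict_atMost:
  "interval_partition s t F \<Longrightarrow> u \<in> F \<Longrightarrow> interval_partition s u (F \<inter> {..u})"
  unfolding interval_partition_def by auto

lemma interval_partition_restrict_atLeast:
  "interval_partition s t F \<Longrightarrow> u \<in> F \<Longrightarrow> interval_partition u t (F \<inter> {u..})"
  unfolding interval_partition_def by auto

lemma next_point_in:
  assumes "finite F" "v \<in> F" "u < v"
  shows "next_point F u \<in> F" "u < next_point F u"
proof -
  have "next_point F u \<in> {v\<in>F. u < v}"
    unfolding next_point_def using assms by (intro Min_in) auto
  then show "next_point F u \<in> F" "u < next_point F u" by auto
qed

lemma next_point_le: "finite F \<Longrightarrow> w \<in> F \<Longrightarrow> u < w \<Longrightarrow> next_point F u \<le> w"
  unfolding next_point_def by (intro Min_le) auto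

lemma next_point_eqI:
  assumes "finite F" "v \<in> F" "u < v" "\<And>w. w \<in> F \<Longrightarrow> u < w \<Longrightarrow> v \<le> w"
  shows "next_point F u = v"
  unfolding next_point_def using assms by (intro Min_eqI) auto

lemma next_point_restrict_atMost:
  assumes "finite F" "u \<in> F" "w < u"
  shows "next_point (F \<inter> {..u}) w = next_point F w"
  using next_point_in[OF assms] next_point_le[OF assms] assms
  by (intro next_point_eqI) (auto intro: next_point_le)

lemma next_point_restrict_atLeast: "u \<le> w \<Longrightarrow> next_point (F \<inter> {u..}) w = next_point F w"
proof -
  assume "u \<le> w"
  then have "{v \<in> F \<inter> {u..}. w < v} = {v \<in> F. w < v}" by auto
  then show ?thesis unfolding next_point_def by simp
qed

lemma partition_sum_split:
  assumes F: "interval_partition s t F" and u: "u \<in> F"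
  shows "partition_sum X F = partition_sum X (F \<inter> {..u}) + partition_sum X (F \<inter> {u..})"
proof -
  have fin: "finite F" and ut: "u \<le> t" using F u unfolding interval_partition_def by auto
  have Max_F: "Max F = t" and Max_lower: "Max (F \<inter> {..u}) = u" and Max_upper: "Max (F \<inter> {u..}) = t"
    using interval_partition_Max interval_partition_restrict_atMost[OF F u]
      interval_partition_restrict_atLeast[OF F u] F by auto
  have split: "{w\<in>F. w < t} = {w\<in>F \<inter> {..u}. w < u} \<union> {w\<in>F \<inter> {u..}. w < t}"
    using ut by auto
  have "partition_sum X F = (\<Sum>w\<in>{w\<in>F \<inter> {..u}. w < u}. X w (next_point F w))
      + (\<Sum>w\<in>{w\<in>F \<inter> {u..}. w < t}. X w (next_point F w))"
    unfolding partition_sum_def Max_F split using fin by (intro sum.union_disjoint) auto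
  also have "(\<Sum>w\<in>{w\<in>F \<inter> {..u}. w < u}. X w (next_point F w)) = partition_sum X (F \<inter> {..u})"
    unfolding partition_sum_def Max_lower using next_point_restrict_atMost[OF fin u]
    by (intro sum.cong) auto
  also have "(\<Sum>w\<in>{w\<in>F \<inter> {u..}. w < t}. X w (next_point F w)) = partition_sum X (F \<inter> {u..})"
    unfolding partition_sum_def Max_upper using next_point_restrict_atLeast[of u]
    by (intro sum.cong) auto
  finally show ?thesis .
qed

lemma partition_sum_singleton [simp]: "partition_sum X {a} = 0"
proof -
  have "{u\<in>{a}. u < Max {a}} = {}" by auto
  then show ?thesis unfolding partition_sum_def by (simp only: sum.empty)
qed

lemma partition_sum_pair: "a < b \<Longrightarrow> partition_sum X {a, b} = X a b"
proof -
  assume ab: "a < b"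
  then have "{u\<in>{a, b}. u < Max {a, b}} = {a}" and "next_point {a, b} a = b"
    by (auto intro: next_point_eqI)
  then show ?thesis unfolding partition_sum_def by simp
qed

lemma partition_sum_cong:
  assumes "finite F" "\<And>a b. a \<in> F \<Longrightarrow> b \<in> F \<Longrightarrow> a < b \<Longrightarrow> X a b = Y a b"
  shows "partition_sum X F = partition_sum Y F"
  unfolding partition_sum_def using assms next_point_in[OF assms(1) Max_in[OF assms(1)]]
  by (intro sum.cong) auto

lemma partition_sum_diff: "partition_sum (\<lambda>a b. X a b - Y a b) F = partition_sum X F - partition_sum Y F"
  unfolding partition_sum_def by (simp add: sum_subtractf)

lemma norm_partition_sum_le: "norm (partition_sum X F) \<le> partition_sum (\<lambda>a b. norm (X a b)) F"
  unfolding partition_sum_def by (rule norm_sum)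

lemma interval_partition_first_step:
  assumes F: "interval_partition s t F" and st: "s < t"
  defines "m \<equiv> next_point F s"
  shows "m \<in> F" "s < m" "F \<inter> {..m} = {s, m}" "card (F \<inter> {m..}) < card F"
proof -
  have fin: "finite F" and F_sub: "F \<subseteq> {s..t}" and sF: "s \<in> F" and tF: "t \<in> F"
    using F unfolding interval_partition_def by auto
  show m: "m \<in> F" "s < m" using next_point_in[OF fin tF st] unfolding m_def by auto
  show "F \<inter> {..m} = {s, m}"
  proof (intro equalityI subsetI)
    fix w assume w: "w \<in> F \<inter> {..m}"
    then have "s \<le> w" using F_sub by auto
    then show "w \<in> {s, m}" using next_point_le[OF fin, of w s] w unfolding m_def by (cases "s = w") auto
  qed (use sF m in auto)
  have "s \<notin> F \<inter> {m..}" using m(2) by auto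
  with sF have "F \<inter> {m..} \<subset> F" by blast
  then show "card (F \<inter> {m..}) < card F" by (rule psubset_card_mono[OF fin])
qed

lemma partition_sum_refine:
  assumes "interval_partition s t F" "interval_partition s t G" "F \<subseteq> G"
  shows "partition_sum X G = partition_sum (\<lambda>a b. partition_sum X (G \<inter> {a..b})) F"
  using assms
proof (induction "card F" arbitrary: F G s rule: less_induct)
  case less
  let ?Y = "\<lambda>a b. partition_sum X (G \<inter> {a..b})"
  show ?case
  proof (cases "s = t")
    case True
    then have "F = {s}" "G = {s}" using less.prems unfolding interval_partition_def by auto
    then show ?thesis by simp
  next
    case False
    then have "s < t" using interval_partition_le[OF less.prems(1)] by simp
    note first = interval_partition_first_step[OF less.prems(1) this]
    define m where "m = next_point F s"
    have mG: "m \<in> G" using first(1) less.prems(3) unfolding m_def by auto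
    have "card (F \<inter> {m..}) < card F" "F \<inter> {m..} \<subseteq> G \<inter> {m..}"
      "interval_partition m t (F \<inter> {m..})" "interval_partition m t (G \<inter> {m..})"
      using less.prems first(1,4) mG interval_partition_restrict_atLeast unfolding m_def by auto
    then have "partition_sum X (G \<inter> {m..})
        = partition_sum (\<lambda>a b. partition_sum X (G \<inter> {m..} \<inter> {a..b})) (F \<inter> {m..})"
      using less.hyps by blast
    also have "\<dots> = partition_sum ?Y (F \<inter> {m..})"
      using less.prems(1) unfolding interval_partition_def
      by (intro partition_sum_cong) (auto intro!: arg_cong[of _ _ "partition_sum X"])
    finally have upper: "partition_sum X (G \<inter> {m..}) = partition_sum ?Y (F \<inter> {m..})" .
    have "G \<inter> {..m} = G \<inter> {s..m}" using less.prems(2) unfolding interval_partition_def by auto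
    then have "partition_sum X G = partition_sum X (G \<inter> {s..m}) + partition_sum X (G \<inter> {m..})"
      using partition_sum_split[OF less.prems(2) mG] by simp
    also have "\<dots> = partition_sum ?Y (F \<inter> {..m}) + partition_sum ?Y (F \<inter> {m..})"
      using first(2,3) unfolding m_def[symmetric] upper by (simp add: partition_sum_pair)
    also have "\<dots> = partition_sum ?Y F"
      unfolding m_def by (rule partition_sum_split[OF less.prems(1) first(1), symmetric])
    finally show ?thesis .
  qed
qed

lemma interval_partition_union:
  assumes F: "interval_partition s u F" and G: "interval_partition u t G"
  shows "interval_partition s t (F \<union> G)"
    and "partition_sum X (F \<union> G) = partition_sum X F + partition_sum X G"
    and "mesh_le d F \<Longrightarrow> mesh_le d G \<Longrightarrow> mesh_le d (F \<union> G)"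
proof -
  have F_sub: "F \<subseteq> {s..u}" and G_sub: "G \<subseteq> {u..t}" and uF: "u \<in> F" and uG: "u \<in> G"
    and fin: "finite (F \<union> G)"
    using F G unfolding interval_partition_def by auto
  show FG: "interval_partition s t (F \<union> G)"
    using F G interval_partition_le[OF F] interval_partition_le[OF G]
    unfolding interval_partition_def by auto
  have u: "u \<in> F \<union> G" using uF by auto
  have lower: "(F \<union> G) \<inter> {..u} = F" and upper: "(F \<union> G) \<inter> {u..} = G"
    using F_sub G_sub uF uG by force+
  show "partition_sum X (F \<union> G) = partition_sum X F + partition_sum X G"
    using partition_sum_split[OF FG u, of X] lower upper by simp
  assume mesh_F: "mesh_le d F" and mesh_G: "mesh_le d G"
  have Max_F: "Max F = u" and Max_G: "Max G = t" and Max_FG: "Max (F \<union> G) = t"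
    using interval_partition_Max F G FG by auto
  show "mesh_le d (F \<union> G)" unfolding mesh_le_def Max_FG
  proof (intro ballI impI)
    fix w assume w: "w \<in> F \<union> G" "w < t"
    show "next_point (F \<union> G) w - w \<le> d"
    proof (cases "w < u")
      case True
      then have "w \<in> F" "next_point (F \<union> G) w = next_point F w"
        using w G_sub next_point_restrict_atMost[OF fin u True] lower by auto
      then show ?thesis using mesh_F True unfolding mesh_le_def Max_F by auto
    next
      case False
      then have "w \<in> G" "next_point (F \<union> G) w = next_point G w"
        using w F_sub uG next_point_restrict_atLeast[of u w "F \<union> G"] upper by auto
      then show ?thesis using mesh_G w unfolding mesh_le_def Max_G by auto
    qed
  qed
qed

lemma mesh_le_mono: "mesh_le d F \<Longrightarrow> d \<le> d' \<Longrightarrow> mesh_le d' F"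
  unfolding mesh_le_def by force

lemma increasing_points_less:
  assumes "\<forall>i<n. p i < (p (Suc i) :: real)" "i < j" "j \<le> n"
  shows "p i < p j"
  using assms(2,3)
proof (induction j)
  case (Suc j)
  have "p j < p (Suc j)" using assms(1) Suc.prems(2) by simp
  with Suc show ?case by (cases "i = j") auto
qed simp

lemma increasing_points_le:
  "\<forall>i<n. p i < (p (Suc i) :: real) \<Longrightarrow> i \<le> j \<Longrightarrow> j \<le> n \<Longrightarrow> p i \<le> p j"
  using increasing_points_less[of n p i j] by (cases "i = j") auto

lemma Max_increasing_points: "\<forall>i<n. p i < (p (Suc i) :: real) \<Longrightarrow> Max (p ` {..n}) = p n"
  using increasing_points_le by (intro Max_eqI) auto

lemma next_point_increasing_points:
  assumes inc: "\<forall>i<n. p i < (p (Suc i) :: real)" and i: "i < n"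
  shows "next_point (p ` {..n}) (p i) = p (Suc i)"
proof (rule next_point_eqI)
  show "p (Suc i) \<le> w" if w: "w \<in> p ` {..n}" "p i < w" for w
  proof -
    obtain j where j: "j \<le> n" "w = p j" using w(1) by auto
    have "i < j" using j w increasing_points_le[OF inc, of j i] i by (cases "j \<le> i") auto
    then show ?thesis using increasing_points_le[OF inc, of "Suc i" j] j by auto
  qed
qed (use i inc in auto)

lemma interval_partition_increasing_points:
  "\<forall>i<n. p i < (p (Suc i) :: real) \<Longrightarrow> interval_partition (p 0) (p n) (p ` {..n})"
  unfolding interval_partition_def using increasing_points_le by fastforce

lemma partition_sum_increasing_points:
  assumes inc: "\<forall>i<n. p i < (p (Suc i) :: real)"
  shows "partition_sum X (p ` {..n}) = (\<Sum>i<n. X (p i) (p (Suc i)))"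
proof -
  note less = increasing_points_less[OF inc]
  have below_Max: "{u\<in>p ` {..n}. u < Max (p ` {..n})} = p ` {..<n}"
  proof (intro equalityI subsetI)
    fix u assume "u \<in> {u\<in>p ` {..n}. u < Max (p ` {..n})}"
    then obtain i where "i \<le> n" "u = p i" "p i < p n" unfolding Max_increasing_points[OF inc] by auto
    then show "u \<in> p ` {..<n}" by (cases "i = n") auto
  qed (use less Max_increasing_points[OF inc] in auto)
  have "inj_on p {..n}"
  proof (rule inj_onI)
    fix i j assume "i \<in> {..n}" "j \<in> {..n}" "p i = p j"
    then show "i = j" using less[of i j] less[of j i] by (cases i j rule: linorder_cases) auto
  qed
  then have "partition_sum X (p ` {..n}) = (\<Sum>i<n. X (p i) (next_point (p ` {..n}) (p i)))"
    unfolding partition_sum_def below_Max by (subst sum.reindex) (auto intro: inj_on_subset)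
  then show ?thesis using next_point_increasing_points[OF inc] by simp
qed

lemma mesh_le_increasing_points_iff:
  assumes inc: "\<forall>i<n. p i < (p (Suc i) :: real)"
  shows "mesh_le d (p ` {..n}) \<longleftrightarrow> (\<forall>i<n. p (Suc i) - p i \<le> d)"
proof
  assume "mesh_le d (p ` {..n})"
  then show "\<forall>i<n. p (Suc i) - p i \<le> d"
    unfolding mesh_le_def Max_increasing_points[OF inc]
    using next_point_increasing_points[OF inc] increasing_points_less[OF inc, of _ n] by fastforce
next
  assume gaps: "\<forall>i<n. p (Suc i) - p i \<le> d"
  show "mesh_le d (p ` {..n})" unfolding mesh_le_def Max_increasing_points[OF inc]
  proof (intro ballI impI)
    fix u assume u: "u \<in> p ` {..n}" "u < p n"
    then obtain i where "i \<le> n" "u = p i" by auto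
    moreover from this u have "i < n" by (cases "i = n") auto
    ultimately show "next_point (p ` {..n}) u - u \<le> d"
      using next_point_increasing_points[OF inc] gaps by auto
  qed
qed

lemma interval_partition_obtain_points:
  assumes "interval_partition s t F"
  obtains n p where "\<forall>i<n. p i < (p (Suc i) :: real)" "F = p ` {..n}" "p 0 = s" "p n = t"
proof -
  have fin: "finite F" and F_sub: "F \<subseteq> {s..t}" and sF: "s \<in> F" and tF: "t \<in> F"
    using assms unfolding interval_partition_def by auto
  obtain xs where xs: "sorted_wrt (<) xs" "set xs = F"
    using finite_set_strict_sorted[OF fin] by blast
  define n where "n = length xs - 1"
  define p where "p i = xs ! i" for i
  have "xs \<noteq> []" using xs sF by auto
  then have "{..n} = {..<length xs}" unfolding n_def by (cases xs) (auto simp: lessThan_Suc_atMost)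
  then have F_eq: "F = p ` {..n}" unfolding xs(2)[symmetric] p_def set_conv_nth by auto
  have inc: "\<forall>i<n. p i < p (Suc i)"
    unfolding p_def n_def using sorted_wrt_nth_less[OF xs(1)] by auto
  have "p 0 \<le> s" "t \<le> p n"
    using sF tF increasing_points_le[OF inc, of 0] increasing_points_le[OF inc, of _ n]
    unfolding F_eq by auto
  moreover have "s \<le> p 0" "p n \<le> t" using F_sub unfolding F_eq by auto
  ultimately have "p 0 = s" "p n = t" by auto
  then show thesis using that inc F_eq by blast
qed

lemma exists_fine_partition:
  assumes "s \<le> t" "d > 0"
  obtains F where "interval_partition s t F" "mesh_le d F"
proof (cases "s = t")
  case True
  then show thesis using that[of "{s}"] by (simp add: interval_partition_def mesh_le_def)
next
  case False
  obtain n where n: "(t - s) / d < real n" using reals_Archimedean2 by blast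
  define c where "c = (t - s) / real (Suc n)"
  define p where "p k = s + real k * c" for k
  have step: "p (Suc i) - p i = c" for i
    unfolding p_def by (simp add: algebra_simps)
  have "c > 0" "c \<le> d"
    using n assms False by (auto simp: c_def field_simps)
  then have inc: "\<forall>i<Suc n. p i < p (Suc i)" and "mesh_le d (p ` {..Suc n})"
    using mesh_le_increasing_points_iff step by (auto simp: algebra_simps)
  moreover have "p 0 = s" "p (Suc n) = t" unfolding p_def c_def by simp_all
  ultimately show thesis using that interval_partition_increasing_points[OF inc] by simp
qed

lemma partition_sum_telescope:
  assumes "interval_partition s t F"
  shows "partition_sum (\<lambda>a b. f b - f a) F = f t - f s"
proof -
  obtain n p where inc: "\<forall>i<n. p i < (p (Suc i) :: real)"
    and F: "F = p ` {..n}" "p 0 = s" "p n = t"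
    using interval_partition_obtain_points[OF assms] .
  have "partition_sum (\<lambda>a b. f b - f a) F = (\<Sum>i<n. f (p (Suc i)) - f (p i))"
    unfolding F(1) by (rule partition_sum_increasing_points[OF inc])
  also have "\<dots> = f (p n) - f (p 0)" by (rule sum_lessThan_telescope)
  finally show ?thesis using F by simp
qed

lemma partition_sum_mesh_bound:
  assumes F: "interval_partition s t F" and mesh: "mesh_le d F" and \<theta>: "\<theta> \<ge> 1" and C: "C \<ge> 0"
    and Y: "\<And>a b. a \<in> F \<Longrightarrow> b \<in> F \<Longrightarrow> a < b \<Longrightarrow> b - a \<le> d \<Longrightarrow> Y a b \<le> C * (b - a) powr \<theta>"
  shows "partition_sum Y F \<le> C * d powr (\<theta> - 1) * (t - s)"
proof -
  have fin: "finite F" using F unfolding interval_partition_def by auto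
  have "partition_sum Y F \<le> partition_sum (\<lambda>a b. C * d powr (\<theta> - 1) * (b - a)) F"
    unfolding partition_sum_def
  proof (intro sum_mono, clarify)
    fix a assume a: "a \<in> F" "a < Max F"
    define b where "b = next_point F a"
    have ab: "b \<in> F" "a < b" "b - a \<le> d"
      using next_point_in[OF fin Max_in[OF fin] a(2)] a mesh fin
      unfolding b_def mesh_le_def by (auto simp: Max_in)
    have "Y a b \<le> C * ((b - a) powr (\<theta> - 1) * (b - a))"
      using Y ab a by (simp add: powr_diff)
    also have "\<dots> \<le> C * (d powr (\<theta> - 1) * (b - a))"
      using ab \<theta> C by (intro mult_left_mono mult_right_mono powr_mono2) auto
    finally show "Y a (next_point F a) \<le> C * d powr (\<theta> - 1) * (next_point F a - a)"
      unfolding b_def by (simp add: mult.assoc)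
  qed
  also have "\<dots> = C * d powr (\<theta> - 1) * (t - s)"
    using partition_sum_telescope[OF F, of "\<lambda>x. C * d powr (\<theta> - 1) * x"]
    by (simp add: algebra_simps)
  finally show ?thesis .
qed

section \<open>The sewing lemma\<close>

text \<open>The constant solves \<open>M = 2 powr (1 - \<theta>) * M + 2\<close>, the recursion produced by halving
  the interval in the sewing bound below.\<close>

definition sewing_constant :: "real \<Rightarrow> real" where
  "sewing_constant \<theta> = 2 / (1 - 2 powr (1 - \<theta>))"

lemma sewing_constant_pos: "\<theta> > 1 \<Longrightarrow> sewing_constant \<theta> > 0"
  unfolding sewing_constant_def by (simp add: powr_less_one)

lemma sewing_constant_halving:
  assumes "\<theta> > 1" "h \<ge> 0"
  shows "2 * (sewing_constant \<theta> * (h / 2) powr \<theta>) + 2 * h powr \<theta> = sewing_constant \<theta> * h powr \<theta>"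
proof -
  define c where "c = 2 powr (1 - \<theta>)"
  have "c < 1" unfolding c_def using assms(1) by (simp add: powr_less_one)
  then have fixpoint: "sewing_constant \<theta> * c + 2 = sewing_constant \<theta>"
    unfolding sewing_constant_def c_def[symmetric] by (simp add: field_simps)
  have "2 * (h / 2) powr \<theta> = c * h powr \<theta>"
    unfolding c_def using assms(2) by (simp add: powr_divide powr_diff)
  then have "2 * (sewing_constant \<theta> * (h / 2) powr \<theta>) + 2 * h powr \<theta>
      = (sewing_constant \<theta> * c + 2) * h powr \<theta>"
    by (simp add: algebra_simps)
  then show ?thesis unfolding fixpoint .
qed

lemma partition_split_midpoint:
  assumes F: "interval_partition a b F" and ab: "a < b"
  obtains u v where "a \<le> u" "u \<le> (a + b) / 2" "(a + b) / 2 < v" "v \<le> b"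
    "interval_partition a u (F \<inter> {..u})" "interval_partition v b (F \<inter> {v..})"
    "card (F \<inter> {..u}) < card F" "card (F \<inter> {v..}) < card F"
    "partition_sum X F = partition_sum X (F \<inter> {..u}) + X u v + partition_sum X (F \<inter> {v..})"
proof -
  define m where "m = (a + b) / 2"
  have fin: "finite F" and F_sub: "F \<subseteq> {a..b}" and aF: "a \<in> F" and bF: "b \<in> F"
    using F unfolding interval_partition_def by auto
  have lower: "finite (F \<inter> {..m})" "F \<inter> {..m} \<noteq> {}" and upper: "finite (F \<inter> {m<..})" "F \<inter> {m<..} \<noteq> {}"
    using fin aF bF ab by (auto simp: m_def)
  define u where "u = Max (F \<inter> {..m})"
  define v where "v = Min (F \<inter> {m<..})"
  have u: "u \<in> F" "u \<le> m" "\<And>w. w \<in> F \<Longrightarrow> w \<le> m \<Longrightarrow> w \<le> u"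
    using Max_in[OF lower] lower unfolding u_def by auto
  have v: "v \<in> F" "m < v" "\<And>w. w \<in> F \<Longrightarrow> m < w \<Longrightarrow> v \<le> w"
    using Min_in[OF upper] upper unfolding v_def by auto
  have au: "a \<le> u" and vb: "v \<le> b" using u(3)[OF aF] v(3)[OF bF] ab by (auto simp: m_def)
  have uv: "u < v" using u v by simp
  define G where "G = F \<inter> {u..}"
  have G: "interval_partition u b G" unfolding G_def by (rule interval_partition_restrict_atLeast[OF F u(1)])
  have vG: "v \<in> G" unfolding G_def using v uv by auto
  have "G \<inter> {..v} = {u, v}"
  proof (intro equalityI subsetI)
    fix w assume "w \<in> G \<inter> {..v}"
    then show "w \<in> {u, v}" using u(3)[of w] v(3)[of w] unfolding G_def by (cases "w \<le> m") auto
  qed (use u v uv in \<open>auto simp: G_def\<close>)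
  moreover have "G \<inter> {v..} = F \<inter> {v..}" unfolding G_def using uv by auto
  ultimately have "partition_sum X G = X u v + partition_sum X (F \<inter> {v..})"
    using partition_sum_split[OF G vG, of X] partition_sum_pair[OF uv] by simp
  then have sum: "partition_sum X F = partition_sum X (F \<inter> {..u}) + X u v + partition_sum X (F \<inter> {v..})"
    using partition_sum_split[OF F u(1), of X] unfolding G_def by simp
  have "b \<notin> F \<inter> {..u}" "a \<notin> F \<inter> {v..}" using u(2) v(2) ab by (auto simp: m_def)
  then have "card (F \<inter> {..u}) < card F" "card (F \<inter> {v..}) < card F"
    using aF bF by (auto intro!: psubset_card_mono[OF fin])
  then show thesis
    using that au u(2) v(2) vb sum F u(1) v(1) unfolding m_def
    by (simp add: interval_partition_restrict_atMost interval_partition_restrict_atLeast)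
qed

definition defect_le :: "real \<Rightarrow> real \<Rightarrow> real \<Rightarrow> real \<Rightarrow> (real \<Rightarrow> real \<Rightarrow> 'a::real_normed_vector) \<Rightarrow> bool" where
  "defect_le \<theta> C s t X \<longleftrightarrow> (\<forall>p q r. s \<le> p \<longrightarrow> p \<le> q \<longrightarrow> q \<le> r \<longrightarrow> r \<le> t \<longrightarrow>
      norm (X p r - X p q - X q r) \<le> C * (r - p) powr \<theta>)"

lemma defect_leD:
  "defect_le \<theta> C s t X \<Longrightarrow> s \<le> p \<Longrightarrow> p \<le> q \<Longrightarrow> q \<le> r \<Longrightarrow> r \<le> t \<Longrightarrow>
    norm (X p r - X p q - X q r) \<le> C * (r - p) powr \<theta>"
  unfolding defect_le_def by blast

lemma defect_le_mono: "defect_le \<theta> C a b X \<Longrightarrow> a \<le> s \<Longrightarrow> t \<le> b \<Longrightarrow> defect_le \<theta> C s t X"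
  unfolding defect_le_def by auto

lemma sewing_bound:
  fixes X :: "real \<Rightarrow> real \<Rightarrow> 'a::real_normed_vector"
  assumes \<theta>: "\<theta> > 1" and C: "C \<ge> 0"
    and defect: "defect_le \<theta> C s t X"
    and F: "interval_partition a b F" and sa: "s \<le> a" and bt: "b \<le> t"
  shows "norm (partition_sum X F - X a b) \<le> sewing_constant \<theta> * C * (b - a) powr \<theta>"
  using F sa bt
proof (induction "card F" arbitrary: F a b rule: less_induct)
  case less
  let ?M = "sewing_constant \<theta>"
  have M: "?M \<ge> 0" using sewing_constant_pos[OF \<theta>] by simp
  have ab: "a \<le> b" using interval_partition_le[OF less.prems(1)] .
  show ?case
  proof (cases "a = b")
    case True
    then have "F = {a}" using less.prems(1) unfolding interval_partition_def by auto
    moreover have "X a a = 0" using defect_leD[OF defect, of a a a] less.prems \<theta> True by simp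
    ultimately show ?thesis using True by simp
  next
    case False
    then have "a < b" using ab by simp
    then obtain u v where uv: "a \<le> u" "u \<le> (a + b) / 2" "(a + b) / 2 < v" "v \<le> b"
      and parts: "interval_partition a u (F \<inter> {..u})" "interval_partition v b (F \<inter> {v..})"
      and card: "card (F \<inter> {..u}) < card F" "card (F \<inter> {v..}) < card F"
      and sum: "partition_sum X F = partition_sum X (F \<inter> {..u}) + X u v + partition_sum X (F \<inter> {v..})"
      using partition_split_midpoint[OF less.prems(1)] by blast
    let ?h = "((b - a) / 2) powr \<theta>"
    have half: "?M * C * (v' - u') powr \<theta> \<le> ?M * C * ?h" if "0 \<le> v' - u'" "v' - u' \<le> (b - a) / 2" for u' v'
      using that \<theta> M C by (intro mult_left_mono powr_mono2) auto
    have left: "norm (partition_sum X (F \<inter> {..u}) - X a u) \<le> ?M * C * ?h"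
      by (rule order_trans[OF less.hyps[OF card(1) parts(1)] half]) (use less.prems uv in auto)
    have right: "norm (partition_sum X (F \<inter> {v..}) - X v b) \<le> ?M * C * ?h"
      by (rule order_trans[OF less.hyps[OF card(2) parts(2)] half]) (use less.prems uv in auto)
    have outer: "norm (X a b - X a u - X u b) \<le> C * (b - a) powr \<theta>"
      using defect_leD[OF defect, of a u b] less.prems uv by simp
    have "norm (X u b - X u v - X v b) \<le> C * (b - u) powr \<theta>"
      using defect_leD[OF defect, of u v b] less.prems uv by simp
    also have "\<dots> \<le> C * (b - a) powr \<theta>"
      using uv \<theta> C by (intro mult_left_mono powr_mono2) auto
    finally have inner: "norm (X u b - X u v - X v b) \<le> C * (b - a) powr \<theta>" .
    have "partition_sum X F - X a b = (partition_sum X (F \<inter> {..u}) - X a u)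
        + (partition_sum X (F \<inter> {v..}) - X v b) - (X a b - X a u - X u b) - (X u b - X u v - X v b)"
      unfolding sum by (simp add: algebra_simps)
    then have "norm (partition_sum X F - X a b) \<le> 2 * (?M * C * ?h) + 2 * (C * (b - a) powr \<theta>)"
      using left right outer inner by (smt (verit) norm_triangle_ineq norm_triangle_ineq4)
    also have "\<dots> = C * (2 * (?M * ?h) + 2 * (b - a) powr \<theta>)"
      by (simp add: algebra_simps)
    also have "\<dots> = ?M * C * (b - a) powr \<theta>"
      using sewing_constant_halving[OF \<theta>, of "b - a"] ab by simp
    finally show ?thesis .
  qed
qed

lemma sewing_refinement_bound:
  fixes X :: "real \<Rightarrow> real \<Rightarrow> 'a::real_normed_vector"
  assumes \<theta>: "\<theta> > 1" and C: "C \<ge> 0"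
    and defect: "defect_le \<theta> C s t X"
    and F: "interval_partition s t F" and G: "interval_partition s t G" and FG: "F \<subseteq> G"
    and mesh: "mesh_le d F"
  shows "norm (partition_sum X G - partition_sum X F) \<le> sewing_constant \<theta> * C * d powr (\<theta> - 1) * (t - s)"
proof -
  have "partition_sum X G - partition_sum X F = partition_sum (\<lambda>a b. partition_sum X (G \<inter> {a..b}) - X a b) F"
    unfolding partition_sum_diff partition_sum_refine[OF F G FG, of X] ..
  then have "norm (partition_sum X G - partition_sum X F)
      \<le> partition_sum (\<lambda>a b. norm (partition_sum X (G \<inter> {a..b}) - X a b)) F"
    using norm_partition_sum_le by metis
  also have "\<dots> \<le> (sewing_constant \<theta> * C) * d powr (\<theta> - 1) * (t - s)"
  proof (rule partition_sum_mesh_bound[OF F mesh])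
    show "0 \<le> sewing_constant \<theta> * C" using sewing_constant_pos[OF \<theta>] C by simp
    fix a b assume ab: "a \<in> F" "b \<in> F" "a < b"
    have "interval_partition a b (G \<inter> {a..b})"
      using ab FG G unfolding interval_partition_def by auto
    moreover have "s \<le> a" "b \<le> t" using ab F unfolding interval_partition_def by auto
    ultimately show "norm (partition_sum X (G \<inter> {a..b}) - X a b) \<le> sewing_constant \<theta> * C * (b - a) powr \<theta>"
      by (rule sewing_bound[OF \<theta> C defect])
  qed (use \<theta> in simp)
  finally show ?thesis .
qed

definition partition_sums_tendsto :: "(real \<Rightarrow> real \<Rightarrow> 'a::real_normed_vector) \<Rightarrow> real \<Rightarrow> real \<Rightarrow> 'a \<Rightarrow> bool" where
  "partition_sums_tendsto X s t I \<longleftrightarrow> (\<forall>e>0. \<exists>d>0. \<forall>F.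
      interval_partition s t F \<and> mesh_le d F \<longrightarrow> norm (partition_sum X F - I) < e)"

lemma partition_sums_tendstoD:
  assumes "partition_sums_tendsto X s t I" "e > 0"
  obtains d where "d > 0" "\<And>F. interval_partition s t F \<Longrightarrow> mesh_le d F \<Longrightarrow> norm (partition_sum X F - I) < e"
  using assms unfolding partition_sums_tendsto_def by blast

lemma partition_sums_tendsto_unique:
  assumes "s \<le> t" "partition_sums_tendsto X s t I" "partition_sums_tendsto X s t J"
  shows "I = J"
proof -
  have "norm (I - J) < e" if e: "e > 0" for e
  proof -
    obtain d1 where d1: "d1 > 0" "\<And>F. interval_partition s t F \<Longrightarrow> mesh_le d1 F \<Longrightarrow> norm (partition_sum X F - I) < e/2"
      using partition_sums_tendstoD[OF assms(2), of "e/2"] e by auto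
    obtain d2 where d2: "d2 > 0" "\<And>F. interval_partition s t F \<Longrightarrow> mesh_le d2 F \<Longrightarrow> norm (partition_sum X F - J) < e/2"
      using partition_sums_tendstoD[OF assms(3), of "e/2"] e by auto
    obtain F where F: "interval_partition s t F" "mesh_le (min d1 d2) F"
      using exists_fine_partition[OF assms(1), of "min d1 d2"] d1(1) d2(1) by auto
    have "norm (partition_sum X F - I) < e/2" "norm (partition_sum X F - J) < e/2"
      using d1(2) d2(2) F mesh_le_mono[OF F(2)] by auto
    then show ?thesis using norm_diff_triangle_less[of I "partition_sum X F" "e/2" J "e/2"]
      by (simp add: norm_minus_commute)
  qed
  then have "\<not> norm (I - J) > 0" by blast
  then show ?thesis by simp
qed

lemma partition_sums_tendsto_point: "partition_sums_tendsto X a a I \<Longrightarrow> I = 0"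
  by (rule partition_sums_tendsto_unique[OF order_refl])
    (auto simp: partition_sums_tendsto_def interval_partition_def dest!: subset_singletonD)

lemma partition_sums_tendsto_diff:
  assumes "partition_sums_tendsto X s t I" "partition_sums_tendsto Y s t J"
  shows "partition_sums_tendsto (\<lambda>a b. X a b - Y a b) s t (I - J)"
  unfolding partition_sums_tendsto_def
proof (intro allI impI)
  fix e :: real assume e: "e > 0"
  obtain d1 where d1: "d1 > 0" "\<And>F. interval_partition s t F \<Longrightarrow> mesh_le d1 F \<Longrightarrow> norm (partition_sum X F - I) < e/2"
    using partition_sums_tendstoD[OF assms(1), of "e/2"] e by auto
  obtain d2 where d2: "d2 > 0" "\<And>F. interval_partition s t F \<Longrightarrow> mesh_le d2 F \<Longrightarrow> norm (partition_sum Y F - J) < e/2"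
    using partition_sums_tendstoD[OF assms(2), of "e/2"] e by auto
  show "\<exists>d>0. \<forall>F. interval_partition s t F \<and> mesh_le d F \<longrightarrow>
      norm (partition_sum (\<lambda>a b. X a b - Y a b) F - (I - J)) < e"
  proof (intro exI[of _ "min d1 d2"] conjI allI impI)
    fix F assume F: "interval_partition s t F \<and> mesh_le (min d1 d2) F"
    then have "norm (partition_sum X F - I) < e/2" "norm (partition_sum Y F - J) < e/2"
      using d1(2) d2(2) mesh_le_mono by auto
    then show "norm (partition_sum (\<lambda>a b. X a b - Y a b) F - (I - J)) < e"
      unfolding partition_sum_diff using norm_triangle_ineq4[of "partition_sum X F - I" "partition_sum Y F - J"]
      by (simp add: algebra_simps)
  qed (use d1 d2 in simp)
qed

lemma partition_sums_tendsto_subinterval: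
  assumes "a \<le> s" "s \<le> t" "partition_sums_tendsto X a t I" "partition_sums_tendsto X a s J"
  shows "partition_sums_tendsto X s t (I - J)"
  unfolding partition_sums_tendsto_def
proof (intro allI impI)
  fix e :: real assume e: "e > 0"
  obtain d1 where d1: "d1 > 0" "\<And>F. interval_partition a t F \<Longrightarrow> mesh_le d1 F \<Longrightarrow> norm (partition_sum X F - I) < e/2"
    using partition_sums_tendstoD[OF assms(3), of "e/2"] e by auto
  obtain d2 where d2: "d2 > 0" "\<And>F. interval_partition a s F \<Longrightarrow> mesh_le d2 F \<Longrightarrow> norm (partition_sum X F - J) < e/2"
    using partition_sums_tendstoD[OF assms(4), of "e/2"] e by auto
  obtain F where F: "interval_partition a s F" "mesh_le (min d1 d2) F"
    using exists_fine_partition[OF assms(1), of "min d1 d2"] d1(1) d2(1) by auto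
  show "\<exists>d>0. \<forall>G. interval_partition s t G \<and> mesh_le d G \<longrightarrow> norm (partition_sum X G - (I - J)) < e"
  proof (intro exI[of _ "min d1 d2"] conjI allI impI)
    fix G assume G: "interval_partition s t G \<and> mesh_le (min d1 d2) G"
    then have FG: "interval_partition a t (F \<union> G)" "mesh_le (min d1 d2) (F \<union> G)"
      and sum: "partition_sum X (F \<union> G) = partition_sum X F + partition_sum X G"
      using interval_partition_union[OF F(1)] F(2) by auto
    have "norm (partition_sum X (F \<union> G) - I) < e/2" "norm (partition_sum X F - J) < e/2"
      using d1(2)[OF FG(1)] d2(2)[OF F(1)] mesh_le_mono FG(2) F(2) by auto
    then show "norm (partition_sum X G - (I - J)) < e"
      using norm_triangle_ineq4[of "partition_sum X (F \<union> G) - I" "partition_sum X F - J"] sum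
      by (simp add: algebra_simps)
  qed (use d1 d2 in simp)
qed

lemma exists_small_powr:
  fixes q c e :: real
  assumes "q > 0" "c \<ge> 0" "e > 0"
  shows "\<exists>d>0. c * d powr q < e"
proof (intro exI conjI)
  define d where "d = (e / (c + 1)) powr (1 / q)"
  show "d > 0" unfolding d_def using assms by simp
  have "c * d powr q = c * (e / (c + 1))" unfolding d_def using assms by (simp add: powr_powr)
  also have "\<dots> < e" using assms by (simp add: field_simps)
  finally show "c * d powr q < e" .
qed

lemma sewing_partition_sums_close:
  fixes X :: "real \<Rightarrow> real \<Rightarrow> 'a::real_normed_vector"
  assumes \<theta>: "\<theta> > 1" and C: "C \<ge> 0" and defect: "defect_le \<theta> C s t X"
    and F: "interval_partition s t F" "mesh_le d F" and G: "interval_partition s t G" "mesh_le d G"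
  shows "norm (partition_sum X F - partition_sum X G) \<le> 2 * sewing_constant \<theta> * C * (t - s) * d powr (\<theta> - 1)"
proof -
  have FG: "interval_partition s t (F \<union> G)"
    using F G unfolding interval_partition_def by auto
  have "partition_sum X F - partition_sum X G
      = (partition_sum X (F \<union> G) - partition_sum X G) - (partition_sum X (F \<union> G) - partition_sum X F)"
    by simp
  then have "norm (partition_sum X F - partition_sum X G)
      \<le> norm (partition_sum X (F \<union> G) - partition_sum X F) + norm (partition_sum X (F \<union> G) - partition_sum X G)"
    by (metis add.commute norm_triangle_ineq4)
  then show ?thesis
    using sewing_refinement_bound[OF \<theta> C defect F(1) FG _ F(2)] sewing_refinement_bound[OF \<theta> C defect G(1) FG _ G(2)]
    by (simp add: algebra_simps)
qed

lemma exists_fine_partition_sequence: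
  assumes st: "s \<le> t"
  shows "\<exists>P :: nat \<Rightarrow> real set. (\<forall>n. interval_partition s t (P n)) \<and> (\<forall>d>0. \<exists>N. \<forall>n\<ge>N. mesh_le d (P n))"
proof -
  have "\<exists>F. interval_partition s t F \<and> mesh_le (1 / Suc n) F" for n
    using exists_fine_partition[OF st, of "1 / Suc n"] by auto
  then obtain P where P: "\<And>n. interval_partition s t (P n)" "\<And>n. mesh_le (1 / Suc n) (P n)"
    by metis
  have "\<exists>N. \<forall>n\<ge>N. mesh_le d (P n)" if "d > 0" for d
  proof -
    obtain N where "1 / d < real N" using reals_Archimedean2 by blast
    have "1 / Suc n \<le> d" if "n \<ge> N" for n
    proof -
      have "1 / d < real (Suc n)" using \<open>1 / d < real N\<close> that by linarith
      then show ?thesis using \<open>d > 0\<close> by (simp add: field_simps)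
    qed
    then show ?thesis using P(2) mesh_le_mono by blast
  qed
  with P(1) show ?thesis by blast
qed

lemma exists_partition_sums_limit:
  fixes X :: "real \<Rightarrow> real \<Rightarrow> 'a::banach"
  assumes st: "s \<le> t" and q: "q > 0" and K: "K \<ge> 0"
    and close: "\<And>F G d. interval_partition s t F \<Longrightarrow> mesh_le d F \<Longrightarrow> interval_partition s t G \<Longrightarrow> mesh_le d G
      \<Longrightarrow> norm (partition_sum X F - partition_sum X G) \<le> K * d powr q"
  obtains I where "partition_sums_tendsto X s t I"
proof -
  obtain P :: "nat \<Rightarrow> real set" where P: "\<And>n. interval_partition s t (P n)"
    and eventually_fine: "\<And>d. d > 0 \<Longrightarrow> \<exists>N. \<forall>n\<ge>N. mesh_le d (P n)"
    using exists_fine_partition_sequence[OF st] by blast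
  note small = exists_small_powr[OF q K]
  have "Cauchy (\<lambda>n. partition_sum X (P n))"
  proof (rule CauchyI)
    fix e :: real assume "e > 0"
    then obtain d where d: "d > 0" "K * d powr q < e" using small by blast
    obtain N where N: "\<forall>n\<ge>N. mesh_le d (P n)" using eventually_fine[OF d(1)] by blast
    have "norm (partition_sum X (P m) - partition_sum X (P n)) < e" if "m \<ge> N" "n \<ge> N" for m n
      using close[OF P(1) _ P(1)] N that d(2) by (meson order.strict_trans1)
    then show "\<exists>M. \<forall>m\<ge>M. \<forall>n\<ge>M. norm (partition_sum X (P m) - partition_sum X (P n)) < e"
      by blast
  qed
  then obtain I where I: "(\<lambda>n. partition_sum X (P n)) \<longlonglongrightarrow> I"
    using Cauchy_convergent_iff convergent_def by blast
  have "partition_sums_tendsto X s t I"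
    unfolding partition_sums_tendsto_def
  proof (intro allI impI)
    fix e :: real assume "e > 0"
    then obtain d where d: "d > 0" "K * d powr q < e / 2"
      using small[of "e / 2"] by auto
    obtain N1 where N1: "\<forall>n\<ge>N1. mesh_le d (P n)" using eventually_fine[OF d(1)] by blast
    obtain N2 where N2: "\<forall>n\<ge>N2. norm (partition_sum X (P n) - I) < e / 2"
      using I \<open>e > 0\<close> unfolding LIMSEQ_iff by (meson half_gt_zero)
    define n where "n = max N1 N2"
    have "norm (partition_sum X F - I) < e" if F: "interval_partition s t F" "mesh_le d F" for F
    proof -
      have "norm (partition_sum X F - partition_sum X (P n)) \<le> K * d powr q"
        using close[OF F P(1)] N1 by (simp add: n_def)
      moreover have "norm (partition_sum X (P n) - I) < e / 2" using N2 by (simp add: n_def)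
      ultimately show ?thesis
        using d(2) norm_triangle_ineq[of "partition_sum X F - partition_sum X (P n)" "partition_sum X (P n) - I"]
        by simp
    qed
    then show "\<exists>d>0. \<forall>F. interval_partition s t F \<and> mesh_le d F \<longrightarrow> norm (partition_sum X F - I) < e"
      using d(1) by blast
  qed
  then show thesis by (rule that)
qed

lemma partition_sums_tendsto_norm_le:
  assumes "s \<le> t" "partition_sums_tendsto X s t I"
    and "\<And>F. interval_partition s t F \<Longrightarrow> norm (partition_sum X F - z) \<le> M"
  shows "norm (I - z) \<le> M"
proof (rule field_le_epsilon)
  fix e :: real assume "e > 0"
  then obtain d where d: "d > 0" "\<And>F. interval_partition s t F \<Longrightarrow> mesh_le d F \<Longrightarrow> norm (partition_sum X F - I) < e"
    using partition_sums_tendstoD[OF assms(2)] by blast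
  obtain F where "interval_partition s t F" "mesh_le d F"
    using exists_fine_partition[OF assms(1) d(1)] .
  then have "norm (I - partition_sum X F) < e" "norm (partition_sum X F - z) \<le> M"
    using d(2) assms(3) by (auto simp: norm_minus_commute)
  moreover have "norm (I - z) \<le> norm (I - partition_sum X F) + norm (partition_sum X F - z)"
    using norm_triangle_ineq[of "I - partition_sum X F" "partition_sum X F - z"] by simp
  ultimately show "norm (I - z) \<le> M + e" by linarith
qed

theorem sewing:
  fixes X :: "real \<Rightarrow> real \<Rightarrow> 'a::banach"
  assumes \<theta>: "\<theta> > 1" and C: "C \<ge> 0" and defect: "defect_le \<theta> C s t X" and st: "s \<le> t"
  shows "\<exists>I. partition_sums_tendsto X s t I \<and> norm (I - X s t) \<le> sewing_constant \<theta> * C * (t - s) powr \<theta>"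
proof -
  have "2 * sewing_constant \<theta> * C * (t - s) \<ge> 0"
    using sewing_constant_pos[OF \<theta>] C st by simp
  then obtain I where I: "partition_sums_tendsto X s t I"
    using exists_partition_sums_limit[OF st _ _ sewing_partition_sums_close[OF \<theta> C defect]] \<theta> by auto
  moreover have "norm (I - X s t) \<le> sewing_constant \<theta> * C * (t - s) powr \<theta>"
    using sewing_bound[OF \<theta> C defect _ order_refl order_refl] by (intro partition_sums_tendsto_norm_le[OF st I])
  ultimately show ?thesis by blast
qed

section \<open>Young integrals\<close>

text \<open>For the germ \<open>X s t = A t (x s) - A s (x s)\<close> of a Young integral this is Davie's
  formulation of a solution: \<open>x t - x s = A t (x s) - A s (x s) + O((t - s) powr \<theta>)\<close>.\<close>

definition remainder_le ::
  "real \<Rightarrow> real \<Rightarrow> real \<Rightarrow> real \<Rightarrow> (real \<Rightarrow> 'a) \<Rightarrow> (real \<Rightarrow> real \<Rightarrow> 'a::real_normed_vector) \<Rightarrow> bool" where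
  "remainder_le \<theta> D a b x X \<longleftrightarrow>
    (\<forall>s t. a \<le> s \<longrightarrow> s \<le> t \<longrightarrow> t \<le> b \<longrightarrow> norm (x t - x s - X s t) \<le> D * (t - s) powr \<theta>)"

lemma remainder_leD:
  "remainder_le \<theta> D a b x X \<Longrightarrow> a \<le> s \<Longrightarrow> s \<le> t \<Longrightarrow> t \<le> b \<Longrightarrow>
    norm (x t - x s - X s t) \<le> D * (t - s) powr \<theta>"
  unfolding remainder_le_def by blast

lemma remainder_le_of_partition_sums_tendsto:
  fixes X :: "real \<Rightarrow> real \<Rightarrow> 'a::banach"
  assumes \<theta>: "\<theta> > 1" and C: "C \<ge> 0" and defect: "defect_le \<theta> C a b X"
    and lim: "\<And>s t. a \<le> s \<Longrightarrow> s \<le> t \<Longrightarrow> t \<le> b \<Longrightarrow> partition_sums_tendsto X s t (x t - x s)"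
  shows "remainder_le \<theta> (sewing_constant \<theta> * C) a b x X"
  unfolding remainder_le_def
proof (intro allI impI)
  fix s t assume st: "a \<le> s" "s \<le> t" "t \<le> b"
  obtain I where I: "partition_sums_tendsto X s t I" "norm (I - X s t) \<le> sewing_constant \<theta> * C * (t - s) powr \<theta>"
    using sewing[OF \<theta> C defect_le_mono[OF defect st(1,3)] st(2)] by blast
  moreover have "I = x t - x s"
    using partition_sums_tendsto_unique[OF st(2) I(1) lim[OF st]] .
  ultimately show "norm (x t - x s - X s t) \<le> sewing_constant \<theta> * C * (t - s) powr \<theta>" by simp
qed

lemma partition_sums_tendsto_increment:
  assumes \<theta>: "\<theta> > 1" and D: "D \<ge> 0" and rem: "remainder_le \<theta> D a b x X"
    and st: "a \<le> s" "s \<le> t" "t \<le> b"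
  shows "partition_sums_tendsto X s t (x t - x s)"
  unfolding partition_sums_tendsto_def
proof (intro allI impI)
  fix e :: real assume "e > 0"
  then obtain d where d: "d > 0" "(D * (t - s)) * d powr (\<theta> - 1) < e"
    using exists_small_powr[of "\<theta> - 1" "D * (t - s)" e] \<theta> D st by auto
  have "norm (partition_sum X F - (x t - x s)) < e" if F: "interval_partition s t F" "mesh_le d F" for F
  proof -
    have "partition_sum X F - (x t - x s) = partition_sum (\<lambda>p r. X p r - (x r - x p)) F"
      by (simp only: partition_sum_diff[of X] partition_sum_telescope[OF F(1)])
    then have "norm (partition_sum X F - (x t - x s)) \<le> partition_sum (\<lambda>p r. norm (X p r - (x r - x p))) F"
      by (simp only: norm_partition_sum_le)
    also have "\<dots> \<le> D * d powr (\<theta> - 1) * (t - s)"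
    proof (rule partition_sum_mesh_bound[OF F])
      fix p r assume "p \<in> F" "r \<in> F" "p < r"
      moreover have "F \<subseteq> {s..t}" using F(1) unfolding interval_partition_def by simp
      ultimately have "a \<le> p" "r \<le> b" using st by auto
      with \<open>p < r\<close> have "norm (x r - x p - X p r) \<le> D * (r - p) powr \<theta>"
        using remainder_leD[OF rem, of p r] by simp
      then show "norm (X p r - (x r - x p)) \<le> D * (r - p) powr \<theta>"
        by (simp add: norm_minus_commute)
    qed (use \<theta> D in auto)
    also have "\<dots> < e" using d by (simp add: algebra_simps)
    finally show ?thesis .
  qed
  then show "\<exists>d>0. \<forall>F. interval_partition s t F \<and> mesh_le d F \<longrightarrow> norm (partition_sum X F - (x t - x s)) < e"
    using d(1) by blast
qed

definition young_germ :: "(real \<Rightarrow> 'v \<Rightarrow> 'w::real_normed_vector) \<Rightarrow> (real \<Rightarrow> 'v) \<Rightarrow> real \<Rightarrow> real \<Rightarrow> 'w" where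
  "young_germ A x s t = A t (x s) - A s (x s)"

lemma partition_sums_tendsto_if_has_young_integral:
  assumes int: "has_young_integral A x s t I"
  shows "partition_sums_tendsto (young_germ A x) s t I"
  unfolding partition_sums_tendsto_def
proof (intro allI impI)
  fix e :: real assume "e > 0"
  then obtain \<delta> where \<delta>: "\<delta> > 0" and close: "\<And>n p. p 0 = s \<and> p n = t \<and> (\<forall>i<n. p i < p (Suc i) \<and> p (Suc i) - p i < \<delta>) \<Longrightarrow>
      norm ((\<Sum>i<n. A (p (Suc i)) (x (p i)) - A (p i) (x (p i))) - I) < e"
    using int unfolding has_young_integral_def by meson
  have "norm (partition_sum (young_germ A x) F - I) < e"
    if F: "interval_partition s t F" "mesh_le (\<delta> / 2) F" for F
  proof -
    obtain n p where inc: "\<forall>i<n. p i < (p (Suc i) :: real)" and p: "F = p ` {..n}" "p 0 = s" "p n = t"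
      using interval_partition_obtain_points[OF F(1)] .
    have "\<forall>i<n. p (Suc i) - p i < \<delta>"
      using mesh_le_increasing_points_iff[OF inc] F(2) \<delta> unfolding p(1) by force
    then have "norm ((\<Sum>i<n. A (p (Suc i)) (x (p i)) - A (p i) (x (p i))) - I) < e"
      using inc p(2,3) by (intro close) auto
    then show ?thesis
      unfolding p(1) partition_sum_increasing_points[OF inc] young_germ_def .
  qed
  then show "\<exists>d>0. \<forall>F. interval_partition s t F \<and> mesh_le d F \<longrightarrow> norm (partition_sum (young_germ A x) F - I) < e"
    using \<delta> by (intro exI[of _ "\<delta> / 2"]) auto
qed

lemma has_young_integral_if_partition_sums_tendsto:
  assumes lim: "partition_sums_tendsto (young_germ A x) s t I"
  shows "has_young_integral A x s t I"
  unfolding has_young_integral_def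
proof (intro allI impI)
  fix e :: real assume "e > 0"
  then obtain d where d: "d > 0"
    and close: "\<And>F. interval_partition s t F \<Longrightarrow> mesh_le d F \<Longrightarrow> norm (partition_sum (young_germ A x) F - I) < e"
    using partition_sums_tendstoD[OF lim] by blast
  have "norm ((\<Sum>i<n. A (p (Suc i)) (x (p i)) - A (p i) (x (p i))) - I) < e"
    if p: "p 0 = s" "p n = t" "\<forall>i<n. p i < p (Suc i) \<and> p (Suc i) - p i < d" for n p
  proof -
    have inc: "\<forall>i<n. p i < p (Suc i)" using p(3) by blast
    have "mesh_le d (p ` {..n})"
      using mesh_le_increasing_points_iff[OF inc] p(3) by (simp add: less_imp_le)
    then have "norm (partition_sum (young_germ A x) (p ` {..n}) - I) < e"
      using close interval_partition_increasing_points[OF inc] p(1,2) by simp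
    then show ?thesis
      unfolding partition_sum_increasing_points[OF inc] young_germ_def .
  qed
  then show "\<exists>\<delta>>0. \<forall>n p. p 0 = s \<and> p n = t \<and> (\<forall>i<n. p i < p (Suc i) \<and> p (Suc i) - p i < \<delta>) \<longrightarrow>
      norm ((\<Sum>i<n. A (p (Suc i)) (x (p i)) - A (p i) (x (p i))) - I) < e"
    using d by blast
qed

lemma has_young_integral_iff:
  "has_young_integral A x s t I \<longleftrightarrow> partition_sums_tendsto (young_germ A x) s t I"
  using partition_sums_tendsto_if_has_young_integral has_young_integral_if_partition_sums_tendsto by blast

section \<open>Regularity of the vector field\<close>

lemma norm_diff_segments_le:
  fixes a b c d :: "'a::real_normed_vector"
  assumes "0 \<le> l" "l \<le> 1"
  shows "norm ((c + l *\<^sub>R (a - c)) - (d + l *\<^sub>R (b - d))) \<le> max (norm (a - b)) (norm (c - d))"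
proof -
  have "(c + l *\<^sub>R (a - c)) - (d + l *\<^sub>R (b - d)) = (1 - l) *\<^sub>R (c - d) + l *\<^sub>R (a - b)"
    by (simp add: algebra_simps)
  then have "norm ((c + l *\<^sub>R (a - c)) - (d + l *\<^sub>R (b - d))) \<le> (1 - l) * norm (c - d) + l * norm (a - b)"
    using assms norm_triangle_ineq[of "(1 - l) *\<^sub>R (c - d)" "l *\<^sub>R (a - b)"] by simp
  also have "\<dots> \<le> (1 - l) * max (norm (a - b)) (norm (c - d)) + l * max (norm (a - b)) (norm (c - d))"
    using assms by (intro add_mono mult_left_mono) auto
  finally show ?thesis by (simp add: algebra_simps)
qed

lemma four_point_estimate:
  fixes f :: "'a::real_normed_vector \<Rightarrow> 'b::real_normed_vector" and D :: "'a \<Rightarrow> 'a \<Rightarrow>\<^sub>L 'b"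
  assumes deriv: "\<And>w. (f has_derivative blinfun_apply (D w)) (at w)"
    and bound: "\<And>w. norm (D w) \<le> M"
    and holder: "\<And>w w'. norm (D w - D w') \<le> M * norm (w - w') powr \<beta>"
    and \<beta>: "\<beta> \<ge> 0"
  shows "norm (f a - f b - f c + f d)
    \<le> M * (norm (a - b - c + d) + max (norm (a - b)) (norm (c - d)) powr \<beta> * norm (b - d))"
proof -
  define B where "B = M * (norm (a - b - c + d) + max (norm (a - b)) (norm (c - d)) powr \<beta> * norm (b - d))"
  define p where "p l = c + l *\<^sub>R (a - c)" for l
  define q where "q l = d + l *\<^sub>R (b - d)" for l
  define g where "g l = f (p l) - f (q l)" for l
  define g' where "g' l = D (p l) (a - c) - D (q l) (b - d)" for l
  \<comment> \<open>\<open>g\<close> interpolates between \<open>f c - f d\<close> and \<open>f a - f b\<close>; splitting \<open>g' l\<close> as below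
    isolates the second difference \<open>a - b - c + d\<close> from the Hoelder increment of \<open>D\<close>.\<close>
  have g_deriv: "(g has_vector_derivative g' l) (at l)" for l
  proof -
    have "(g has_derivative (\<lambda>h. D (p l) (h *\<^sub>R (a - c)) - D (q l) (h *\<^sub>R (b - d)))) (at l)"
      unfolding g_def p_def q_def
      by (intro has_derivative_diff has_derivative_compose[OF _ deriv] derivative_eq_intros) auto
    moreover have "(\<lambda>h. D (p l) (h *\<^sub>R (a - c)) - D (q l) (h *\<^sub>R (b - d))) = (\<lambda>h. h *\<^sub>R g' l)"
      unfolding g'_def by (rule ext) (simp only: blinfun.scaleR_right scaleR_diff_right[symmetric])
    ultimately show ?thesis unfolding has_vector_derivative_def by simp
  qed
  have g'_bound: "norm (g' l) \<le> B" if l: "0 < l" "l < 1" for l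
  proof -
    have "g' l = D (p l) (a - b - c + d) + (D (p l) - D (q l)) (b - d)"
      unfolding g'_def by (simp add: blinfun.diff_left blinfun.diff_right blinfun.add_right algebra_simps)
    moreover have "norm (D (p l) (a - b - c + d)) \<le> M * norm (a - b - c + d)"
      by (rule order_trans[OF norm_blinfun mult_right_mono[OF bound norm_ge_zero]])
    moreover have "norm ((D (p l) - D (q l)) (b - d))
        \<le> M * max (norm (a - b)) (norm (c - d)) powr \<beta> * norm (b - d)"
    proof -
      let ?m = "max (norm (a - b)) (norm (c - d))"
      have "norm (p l - q l) \<le> ?m"
        unfolding p_def q_def using l by (intro norm_diff_segments_le) auto
      then have "norm (D (p l) - D (q l)) \<le> M * ?m powr \<beta>"
        using holder[of "p l" "q l"] bound[of "p l"] \<beta>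
        by (smt (verit) mult_left_mono norm_ge_zero powr_mono2)
      then show ?thesis
        by (rule order_trans[OF norm_blinfun mult_right_mono[OF _ norm_ge_zero]])
    qed
    ultimately show ?thesis unfolding B_def
      by (smt (verit) norm_triangle_ineq distrib_left mult.assoc)
  qed
  have "norm (g 1 - g 0) \<le> 1 * B - 0 * B"
    by (rule differentiable_bound_general[OF zero_less_one _ _ g_deriv, of "\<lambda>l. l * B" "\<lambda>_. B"])
      (auto intro!: continuous_intros derivative_eq_intros has_vector_derivative_continuous[OF g_deriv]
        continuous_at_imp_continuous_on g'_bound simp: has_vector_derivative_def)
  moreover have "g 1 - g 0 = f a - f b - f c + f d"
    unfolding g_def p_def q_def by (simp add: algebra_simps)
  ultimately show ?thesis unfolding B_def by simp
qed

definition holder_on :: "real \<Rightarrow> real \<Rightarrow> real \<Rightarrow> real \<Rightarrow> (real \<Rightarrow> 'v::real_normed_vector) \<Rightarrow> bool" where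
  "holder_on \<gamma> R a b x \<longleftrightarrow> (\<forall>s t. a \<le> s \<longrightarrow> s \<le> t \<longrightarrow> t \<le> b \<longrightarrow> norm (x t - x s) \<le> R * (t - s) powr \<gamma>)"

lemma holder_onD:
  "holder_on \<gamma> R a b x \<Longrightarrow> a \<le> s \<Longrightarrow> s \<le> t \<Longrightarrow> t \<le> b \<Longrightarrow> norm (x t - x s) \<le> R * (t - s) powr \<gamma>"
  unfolding holder_on_def by blast

lemma holder_on_mono:
  "holder_on \<gamma> R a b x \<Longrightarrow> R \<le> R' \<Longrightarrow> a \<le> a' \<Longrightarrow> b' \<le> b \<Longrightarrow> holder_on \<gamma> R' a' b' x"
  unfolding holder_on_def
  by (smt (verit, ccfv_threshold) mult_right_mono powr_ge_zero)

lemma holder_on_norm_le: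
  assumes "holder_on \<gamma> Z a b f" "f a = 0" "a \<le> q" "q \<le> b" "b - a \<le> h" "Z \<ge> 0" "\<gamma> \<ge> 0"
  shows "norm (f q) \<le> Z * h powr \<gamma>"
proof -
  have "norm (f q) \<le> Z * (q - a) powr \<gamma>" using holder_onD[OF assms(1), of a q] assms(2-4) by simp
  also have "\<dots> \<le> Z * h powr \<gamma>" using assms(3-7) by (intro mult_left_mono powr_mono2) auto
  finally show ?thesis .
qed

lemma powr_tendsto_zero_at_right: "q > 0 \<Longrightarrow> ((\<lambda>h::real. h powr q) \<longlongrightarrow> 0) (at_right 0)"
  by (intro tendsto_zero_powrI tendsto_ident_at tendsto_const) (auto intro: eventually_mono[OF eventually_at_right_less])

text \<open>The quantitative content of \<^const>\<open>field_holder_1\<close> used below, with one constant \<open>K\<close>.\<close>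

locale young_field =
  fixes T \<alpha> \<beta> :: real and A :: "real \<Rightarrow> 'v::banach \<Rightarrow> 'v" and DA :: "real \<Rightarrow> 'v \<Rightarrow> 'v \<Rightarrow>\<^sub>L 'v"
    and K :: real
  assumes T: "T > 0" and \<alpha>: "0 < \<alpha>" "\<alpha> < 1" and \<beta>: "0 < \<beta>" "\<beta> < 1" and \<alpha>\<beta>: "\<alpha> * (1 + \<beta>) > 1"
    and K: "K > 0"
    and A_increment: "\<And>s t x. 0 \<le> s \<Longrightarrow> s \<le> t \<Longrightarrow> t \<le> T \<Longrightarrow> norm (A t x - A s x) \<le> K * (t - s) powr \<alpha>"
    and A_deriv: "\<And>t x. 0 \<le> t \<Longrightarrow> t \<le> T \<Longrightarrow> (A t has_derivative blinfun_apply (DA t x)) (at x)"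
    and DA_increment: "\<And>s t x. 0 \<le> s \<Longrightarrow> s \<le> t \<Longrightarrow> t \<le> T \<Longrightarrow> norm (DA t x - DA s x) \<le> K * (t - s) powr \<alpha>"
    and DA_increment_holder: "\<And>s t x y. 0 \<le> s \<Longrightarrow> s \<le> t \<Longrightarrow> t \<le> T \<Longrightarrow>
      norm ((DA t x - DA s x) - (DA t y - DA s y)) \<le> K * (t - s) powr \<alpha> * norm (x - y) powr \<beta>"
begin

lemma two_\<alpha>: "\<alpha> + \<alpha> > 1"
proof -
  have "\<alpha> * (1 + \<beta>) < \<alpha> * 2" using \<alpha> \<beta> by (intro mult_strict_left_mono) auto
  then show ?thesis using \<alpha>\<beta> by simp
qed

lemma increment_four_point:
  assumes "0 \<le> s" "s \<le> t" "t \<le> T"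
  defines "f \<equiv> \<lambda>w. A t w - A s w"
  shows "norm (f a - f b - f c + f d) \<le>
    K * (t - s) powr \<alpha> * (norm (a - b - c + d) + max (norm (a - b)) (norm (c - d)) powr \<beta> * norm (b - d))"
proof (rule four_point_estimate)
  show "(f has_derivative blinfun_apply (DA t w - DA s w)) (at w)" for w
  proof -
    have "(f has_derivative (\<lambda>h. DA t w h - DA s w h)) (at w)"
      unfolding f_def using A_deriv[of t w] A_deriv[of s w] assms by (intro has_derivative_diff) auto
    moreover have "blinfun_apply (DA t w - DA s w) = (\<lambda>h. DA t w h - DA s w h)"
      by (rule ext) (simp add: blinfun.diff_left)
    ultimately show ?thesis by simp
  qed
  show "norm (DA t w - DA s w) \<le> K * (t - s) powr \<alpha>" for w
    using DA_increment[OF assms(1-3)] .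
  show "norm ((DA t w - DA s w) - (DA t w' - DA s w')) \<le> K * (t - s) powr \<alpha> * norm (w - w') powr \<beta>"
    for w w'
    using DA_increment_holder[OF assms(1-3)] .
qed (use \<beta> in simp)

lemma increment_lipschitz:
  assumes "0 \<le> s" "s \<le> t" "t \<le> T"
  shows "norm ((A t x - A s x) - (A t y - A s y)) \<le> K * (t - s) powr \<alpha> * norm (x - y)"
  using increment_four_point[OF assms, of x y y y] by simp

lemma increment_lipschitz_holder:
  assumes "0 \<le> s" "s \<le> a" "a \<le> t" "t \<le> T" and L: "L \<ge> 0"
    and uv: "norm (u - v) \<le> L * (a - s) powr \<alpha>"
  shows "norm ((A t u - A a u) - (A t v - A a v)) \<le> K * L * (t - s) powr (\<alpha> + \<alpha>)"
proof -
  have "norm ((A t u - A a u) - (A t v - A a v)) \<le> K * (t - a) powr \<alpha> * norm (u - v)"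
    using increment_lipschitz[of a t u v] assms by simp
  also have "\<dots> \<le> K * (t - s) powr \<alpha> * (L * (t - s) powr \<alpha>)"
  proof (intro mult_mono mult_left_mono)
    show "(t - a) powr \<alpha> \<le> (t - s) powr \<alpha>" using assms \<alpha> by (intro powr_mono2) auto
    show "norm (u - v) \<le> L * (t - s) powr \<alpha>"
      using uv order_trans[OF _ mult_left_mono[OF powr_mono2 L]] assms \<alpha> by force
  qed (use K L in auto)
  also have "\<dots> = K * L * (t - s) powr (\<alpha> + \<alpha>)" unfolding powr_add by (simp add: mult_ac)
  finally show ?thesis .
qed

lemma young_germ_bound: "0 \<le> s \<Longrightarrow> s \<le> t \<Longrightarrow> t \<le> T \<Longrightarrow> norm (young_germ A x s t) \<le> K * (t - s) powr \<alpha>"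
  unfolding young_germ_def by (rule A_increment)

lemma young_germ_defect:
  assumes x: "holder_on \<gamma> R a b x" and ab: "0 \<le> a" "b \<le> T" and R: "R \<ge> 0" and \<gamma>: "\<gamma> \<ge> 0"
  shows "defect_le (\<alpha> + \<gamma>) (K * R) a b (young_germ A x)"
  unfolding defect_le_def
proof (intro allI impI)
  fix p q r assume pqr: "a \<le> p" "p \<le> q" "q \<le> r" "r \<le> b"
  have "young_germ A x p r - young_germ A x p q - young_germ A x q r
      = (A r (x p) - A q (x p)) - (A r (x q) - A q (x q))"
    unfolding young_germ_def by (simp add: algebra_simps)
  then have "norm (young_germ A x p r - young_germ A x p q - young_germ A x q r)
      \<le> K * (r - q) powr \<alpha> * norm (x p - x q)"
    using increment_lipschitz[of q r "x p" "x q"] pqr ab by simp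
  also have "\<dots> \<le> K * (r - p) powr \<alpha> * (R * (r - p) powr \<gamma>)"
  proof (intro mult_mono mult_left_mono)
    show "(r - q) powr \<alpha> \<le> (r - p) powr \<alpha>" using pqr \<alpha> by (intro powr_mono2) auto
    have "norm (x p - x q) \<le> R * (q - p) powr \<gamma>"
      using holder_onD[OF x, of p q] pqr by (simp add: norm_minus_commute)
    also have "\<dots> \<le> R * (r - p) powr \<gamma>" using pqr R \<gamma> by (intro mult_left_mono powr_mono2) auto
    finally show "norm (x p - x q) \<le> R * (r - p) powr \<gamma>" .
  qed (use K in auto)
  also have "\<dots> = K * R * (r - p) powr (\<alpha> + \<gamma>)" by (simp add: powr_add)
  finally show "norm (young_germ A x p r - young_germ A x p q - young_germ A x q r)
      \<le> K * R * (r - p) powr (\<alpha> + \<gamma>)" .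
qed

lemma holder_on_of_remainder_le:
  assumes ab: "0 \<le> a" "b \<le> T" and D: "D \<ge> 0" and \<gamma>: "\<gamma> \<ge> 0"
    and rem: "remainder_le (\<alpha> + \<gamma>) D a b y (young_germ A x)"
  shows "holder_on \<alpha> (K + D * (b - a) powr \<gamma>) a b y"
  unfolding holder_on_def
proof (intro allI impI)
  fix s t assume st: "a \<le> s" "s \<le> t" "t \<le> b"
  have "norm (y t - y s) \<le> norm (young_germ A x s t) + norm (y t - y s - young_germ A x s t)"
    using norm_triangle_ineq[of "young_germ A x s t" "y t - y s - young_germ A x s t"] by simp
  also have "\<dots> \<le> K * (t - s) powr \<alpha> + D * ((t - s) powr \<alpha> * (b - a) powr \<gamma>)"
  proof (intro add_mono)
    show "norm (young_germ A x s t) \<le> K * (t - s) powr \<alpha>" using young_germ_bound st ab by auto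
    have "norm (y t - y s - young_germ A x s t) \<le> D * ((t - s) powr \<alpha> * (t - s) powr \<gamma>)"
      using remainder_leD[OF rem st] by (simp add: powr_add)
    also have "\<dots> \<le> D * ((t - s) powr \<alpha> * (b - a) powr \<gamma>)"
      using D \<gamma> st by (intro mult_left_mono powr_mono2) auto
    finally show "norm (y t - y s - young_germ A x s t) \<le> D * ((t - s) powr \<alpha> * (b - a) powr \<gamma>)" .
  qed
  also have "\<dots> = (K + D * (b - a) powr \<gamma>) * (t - s) powr \<alpha>" by (simp add: algebra_simps)
  finally show "norm (y t - y s) \<le> (K + D * (b - a) powr \<gamma>) * (t - s) powr \<alpha>" .
qed

lemma young_germ_difference_defect:
  assumes ab: "0 \<le> a" "a \<le> b" "b \<le> T" "b - a \<le> h" and R: "R \<ge> 0" and Z: "Z \<ge> 0"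
    and x: "holder_on \<alpha> R a b x" and y: "holder_on \<alpha> R a b y" and start: "x a = y a"
    and xy: "holder_on \<alpha> Z a b (\<lambda>t. x t - y t)"
  shows "defect_le (\<alpha> + \<alpha> * \<beta>) (K * Z * (h powr (\<alpha> - \<alpha> * \<beta>) + R powr \<beta> * h powr \<alpha>)) a b
    (\<lambda>p r. young_germ A x p r - young_germ A y p r)"
  unfolding defect_le_def
proof (intro allI impI)
  fix p q r assume pqr: "a \<le> p" "p \<le> q" "q \<le> r" "r \<le> b"
  let ?W = "\<lambda>p r. young_germ A x p r - young_germ A y p r"
  have gap: "norm (x q - y q) \<le> Z * h powr \<alpha>"
    using holder_on_norm_le[OF xy _ _ _ ab(4) Z] start pqr \<alpha> by simp
  have "norm (x p - x q - y p + y q) = norm ((x q - y q) - (x p - y p))"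
    by (simp add: algebra_simps norm_minus_commute)
  also have "\<dots> \<le> Z * (q - p) powr \<alpha>" using holder_onD[OF xy, of p q] pqr by simp
  also have "\<dots> \<le> Z * (r - p) powr \<alpha>" using pqr Z \<alpha> by (intro mult_left_mono powr_mono2) auto
  finally have diff: "norm (x p - x q - y p + y q) \<le> Z * (r - p) powr \<alpha>" .
  have "norm (x p - x q) \<le> R * (r - p) powr \<alpha>" "norm (y p - y q) \<le> R * (r - p) powr \<alpha>"
    using holder_onD[OF x, of p q] holder_onD[OF y, of p q] pqr R \<alpha>
    by (smt (verit) mult_left_mono norm_minus_commute powr_mono2)+
  then have "max (norm (x p - x q)) (norm (y p - y q)) powr \<beta> \<le> (R * (r - p) powr \<alpha>) powr \<beta>"
    using \<beta> by (intro powr_mono2) (auto simp: le_max_iff_disj)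
  also have "\<dots> = R powr \<beta> * (r - p) powr (\<alpha> * \<beta>)"
    using R pqr by (simp add: powr_mult powr_powr)
  finally have incr: "max (norm (x p - x q)) (norm (y p - y q)) powr \<beta> \<le> R powr \<beta> * (r - p) powr (\<alpha> * \<beta>)" .
  have "?W p r - ?W p q - ?W q r = (A r (x p) - A q (x p)) - (A r (x q) - A q (x q))
      - (A r (y p) - A q (y p)) + (A r (y q) - A q (y q))"
    unfolding young_germ_def by (simp add: algebra_simps)
  then have "norm (?W p r - ?W p q - ?W q r) \<le> K * (r - q) powr \<alpha> * (norm (x p - x q - y p + y q)
      + max (norm (x p - x q)) (norm (y p - y q)) powr \<beta> * norm (x q - y q))"
    using increment_four_point[of q r] pqr ab by simp
  also have "\<dots> \<le> K * (r - p) powr \<alpha> * (Z * (r - p) powr \<alpha>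
      + R powr \<beta> * (r - p) powr (\<alpha> * \<beta>) * (Z * h powr \<alpha>))"
    using diff incr gap pqr K \<alpha> by (intro mult_mono add_mono powr_mono2) auto
  also have "\<dots> \<le> K * Z * (h powr (\<alpha> - \<alpha> * \<beta>) + R powr \<beta> * h powr \<alpha>) * (r - p) powr (\<alpha> + \<alpha> * \<beta>)"
  proof -
    have "(r - p) powr (\<alpha> - \<alpha> * \<beta>) \<le> h powr (\<alpha> - \<alpha> * \<beta>)"
      using pqr ab \<alpha> \<beta> by (intro powr_mono2) (auto simp: mult_le_cancel_left1)
    moreover have "(r - p) powr \<alpha> * (r - p) powr \<alpha> = (r - p) powr (\<alpha> - \<alpha> * \<beta>) * (r - p) powr (\<alpha> + \<alpha> * \<beta>)"
      by (simp add: powr_add[symmetric])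
    ultimately have "(r - p) powr \<alpha> * (r - p) powr \<alpha> \<le> h powr (\<alpha> - \<alpha> * \<beta>) * (r - p) powr (\<alpha> + \<alpha> * \<beta>)"
      by (simp add: mult_right_mono)
    then show ?thesis
      using K Z R by (simp add: algebra_simps powr_add mult_left_mono)
  qed
  finally show "norm (?W p r - ?W p q - ?W q r)
      \<le> K * Z * (h powr (\<alpha> - \<alpha> * \<beta>) + R powr \<beta> * h powr \<alpha>) * (r - p) powr (\<alpha> + \<alpha> * \<beta>)" .
qed

definition contraction_factor :: "real \<Rightarrow> real \<Rightarrow> real" where
  "contraction_factor h R =
    K * h powr \<alpha> + sewing_constant (\<alpha> + \<alpha> * \<beta>) * K * (h powr \<alpha> + R powr \<beta> * h powr (\<alpha> + \<alpha> * \<beta>))"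

lemma eventually_contraction_factor_less: "eventually (\<lambda>h. contraction_factor h R < c) (at_right 0)" if "c > 0"
proof -
  have "((\<lambda>h. contraction_factor h R) \<longlongrightarrow> K * 0 + sewing_constant (\<alpha> + \<alpha> * \<beta>) * K * (0 + R powr \<beta> * 0))
      (at_right 0)"
    unfolding contraction_factor_def using \<alpha> \<beta>
    by (intro tendsto_intros powr_tendsto_zero_at_right) (auto simp: add_pos_pos)
  then show ?thesis using that by (auto dest: order_tendstoD)
qed

lemma young_integral_difference_holder:
  assumes ab: "0 \<le> a" "a \<le> b" "b \<le> T" "b - a \<le> h" and R: "R \<ge> 0" and Z: "Z \<ge> 0"
    and x: "holder_on \<alpha> R a b x" and y: "holder_on \<alpha> R a b y" and start: "x a = y a"
    and xy: "holder_on \<alpha> Z a b (\<lambda>t. x t - y t)"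
    and u: "\<And>s t. a \<le> s \<Longrightarrow> s \<le> t \<Longrightarrow> t \<le> b \<Longrightarrow> partition_sums_tendsto (young_germ A x) s t (u t - u s)"
    and v: "\<And>s t. a \<le> s \<Longrightarrow> s \<le> t \<Longrightarrow> t \<le> b \<Longrightarrow> partition_sums_tendsto (young_germ A y) s t (v t - v s)"
  shows "holder_on \<alpha> (Z * contraction_factor h R) a b (\<lambda>t. u t - v t)"
  unfolding holder_on_def
proof (intro allI impI)
  fix s t assume st: "a \<le> s" "s \<le> t" "t \<le> b"
  define \<theta> where "\<theta> = \<alpha> + \<alpha> * \<beta>"
  define C where "C = K * Z * (h powr (\<alpha> - \<alpha> * \<beta>) + R powr \<beta> * h powr \<alpha>)"
  define W where "W p r = young_germ A x p r - young_germ A y p r" for p r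
  have \<theta>: "\<theta> > 1" using \<alpha>\<beta> unfolding \<theta>_def by (simp add: algebra_simps)
  have C: "C \<ge> 0" unfolding C_def using K Z by simp
  have "remainder_le \<theta> (sewing_constant \<theta> * C) a b (\<lambda>t. u t - v t) W"
  proof (rule remainder_le_of_partition_sums_tendsto[OF \<theta> C])
    show "defect_le \<theta> C a b W"
      unfolding \<theta>_def C_def W_def by (rule young_germ_difference_defect[OF ab R Z x y start xy])
    show "partition_sums_tendsto W p r ((u r - v r) - (u p - v p))" if "a \<le> p" "p \<le> r" "r \<le> b" for p r
      using partition_sums_tendsto_diff[OF u[OF that] v[OF that]] unfolding W_def
      by (simp add: algebra_simps)
  qed
  then have rem: "norm ((u t - v t) - (u s - v s) - W s t) \<le> sewing_constant \<theta> * C * (t - s) powr \<theta>"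
    using st by (rule remainder_leD)
  have gap: "norm (x s - y s) \<le> Z * h powr \<alpha>"
    using holder_on_norm_le[OF xy _ _ _ ab(4) Z] start st \<alpha> by simp
  have "norm (W s t) \<le> K * (t - s) powr \<alpha> * norm (x s - y s)"
    unfolding W_def young_germ_def using increment_lipschitz[of s t "x s" "y s"] st ab by simp
  also have "\<dots> \<le> K * (t - s) powr \<alpha> * (Z * h powr \<alpha>)" using gap K by (intro mult_left_mono) auto
  finally have germ: "norm (W s t) \<le> K * (t - s) powr \<alpha> * (Z * h powr \<alpha>)" .
  have "(t - s) powr \<theta> \<le> (t - s) powr \<alpha> * h powr (\<alpha> * \<beta>)"
    unfolding \<theta>_def powr_add using st ab \<alpha> \<beta> by (intro mult_left_mono powr_mono2) auto
  then have "sewing_constant \<theta> * C * (t - s) powr \<theta> \<le> sewing_constant \<theta> * C * ((t - s) powr \<alpha> * h powr (\<alpha> * \<beta>))"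
    using sewing_constant_pos[OF \<theta>] C by (intro mult_left_mono) auto
  then have "norm ((u t - v t) - (u s - v s))
      \<le> K * (t - s) powr \<alpha> * (Z * h powr \<alpha>) + sewing_constant \<theta> * C * ((t - s) powr \<alpha> * h powr (\<alpha> * \<beta>))"
    using norm_triangle_sub[of "(u t - v t) - (u s - v s)" "W s t"] germ rem by linarith
  also have "\<dots> = Z * contraction_factor h R * (t - s) powr \<alpha>"
  proof -
    have Ch: "C * h powr (\<alpha> * \<beta>) = K * Z * (h powr \<alpha> + R powr \<beta> * h powr (\<alpha> + \<alpha> * \<beta>))"
      unfolding C_def by (simp add: algebra_simps flip: powr_add)
    have "sewing_constant \<theta> * C * ((t - s) powr \<alpha> * h powr (\<alpha> * \<beta>))
        = sewing_constant \<theta> * (t - s) powr \<alpha> * (C * h powr (\<alpha> * \<beta>))"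
      by (simp only: ac_simps)
    then show ?thesis
      unfolding Ch contraction_factor_def \<theta>_def[symmetric] by (simp add: algebra_simps)
  qed
  finally show "norm ((u t - v t) - (u s - v s)) \<le> Z * contraction_factor h R * (t - s) powr \<alpha>" .
qed

end

lemma holder_path_of_holder_on:
  assumes "holder_on \<gamma> R 0 T x" "R \<ge> 0" "\<gamma> \<ge> 0"
  shows "holder_path T \<gamma> x"
  unfolding holder_path_def
proof (intro exI[of _ "norm (x 0) + R * T powr \<gamma> + R"] conjI ballI impI)
  fix t assume t: "t \<in> {0..T}"
  have "norm (x t) \<le> norm (x 0) + norm (x t - x 0)"
    using norm_triangle_sub[of "x t" "x 0"] by simp
  also have "norm (x t - x 0) \<le> R * T powr \<gamma>"
    using holder_onD[OF assms(1), of 0 t] t assms(2,3)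
    by (smt (verit) atLeastAtMost_iff mult_left_mono powr_mono2)
  finally show "norm (x t) \<le> norm (x 0) + R * T powr \<gamma> + R" using assms(2) by simp
next
  fix s t assume "s \<in> {0..T}" "t \<in> {0..T}" "s < t"
  then have "norm (x t - x s) \<le> R * (t - s) powr \<gamma>" using holder_onD[OF assms(1)] by simp
  also have "\<dots> \<le> (norm (x 0) + R * T powr \<gamma> + R) * (t - s) powr \<gamma>"
    using assms(2) by (intro mult_right_mono) auto
  finally show "norm (x t - x s) \<le> (norm (x 0) + R * T powr \<gamma> + R) * (t - s) powr \<gamma>" .
qed

lemma holder_on_of_holder_path:
  assumes "holder_path T \<gamma> x"
  obtains R where "R \<ge> 0" "holder_on \<gamma> R 0 T x"
proof -
  obtain R where R: "\<And>s t. s \<in> {0..T} \<Longrightarrow> t \<in> {0..T} \<Longrightarrow> s < t \<Longrightarrow> norm (x t - x s) \<le> R * (t - s) powr \<gamma>"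
    using assms unfolding holder_path_def by blast
  have "holder_on \<gamma> (max R 0) 0 T x"
    unfolding holder_on_def
  proof (intro allI impI)
    fix s t assume st: "0 \<le> s" "s \<le> t" "t \<le> T"
    show "norm (x t - x s) \<le> max R 0 * (t - s) powr \<gamma>"
    proof (cases "s = t")
      case False
      then have "norm (x t - x s) \<le> R * (t - s) powr \<gamma>" using R st by simp
      also have "\<dots> \<le> max R 0 * (t - s) powr \<gamma>" by (intro mult_right_mono) auto
      finally show ?thesis .
    qed simp
  qed
  then show thesis using that[of "max R 0"] by simp
qed

lemma holder_on_geometric_zero:
  fixes f :: "real \<Rightarrow> 'v::real_normed_vector"
  assumes "\<And>k. holder_on \<gamma> (c / 2 ^ k) a b f" "f a = 0" "a \<le> t" "t \<le> b"
  shows "f t = 0"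
proof -
  have "norm (f t) \<le> c * (t - a) powr \<gamma> * (1 / 2) ^ k" for k
    using holder_onD[OF assms(1)[of k], of a t] assms(2-4) by (simp add: power_one_over field_simps)
  moreover have "(\<lambda>k. c * (t - a) powr \<gamma> * (1 / 2) ^ k) \<longlonglongrightarrow> 0"
    by (intro tendsto_mult_right_zero LIMSEQ_power_zero) simp
  ultimately have "norm (f t) \<le> 0" by (intro LIMSEQ_le_const) auto
  then show ?thesis by simp
qed

lemma holder_on_geometric_convergent:
  fixes f :: "nat \<Rightarrow> real \<Rightarrow> 'v::banach"
  assumes "\<And>k. holder_on \<gamma> (c / 2 ^ k) a b (\<lambda>t. f (Suc k) t - f k t)" "\<And>k. f k a = \<xi>"
    and "a \<le> t" "t \<le> b"
  shows "convergent (\<lambda>k. f k t)"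
proof -
  have "norm (f (Suc k) t - f k t) \<le> c * (t - a) powr \<gamma> * (1 / 2) ^ k" for k
    using holder_onD[OF assms(1)[of k], of a t] assms(2-4) by (simp add: power_one_over field_simps)
  then have "summable (\<lambda>k. f (Suc k) t - f k t)"
    by (intro summable_comparison_test'[OF summable_mult[OF summable_geometric]]) auto
  then have "convergent (\<lambda>n. \<Sum>k<n. f (Suc k) t - f k t)"
    using summable_iff_convergent by blast
  then have "convergent (\<lambda>n. f 0 t + (\<Sum>k<n. f (Suc k) t - f k t))"
    by (intro convergent_add convergent_const)
  then show ?thesis using sum_lessThan_telescope[of "\<lambda>k. f k t"] by simp
qed

lemma real_interval_step_induct:
  fixes h T :: real
  assumes h: "h > 0" and T: "0 \<le> T" and start: "P 0"
    and step: "\<And>a b. 0 \<le> a \<Longrightarrow> a \<le> b \<Longrightarrow> b \<le> T \<Longrightarrow> b - a \<le> h \<Longrightarrow> P a \<Longrightarrow> P b"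
  shows "P T"
proof -
  have "P (min (real n * h) T)" for n
  proof (induction n)
    case 0
    then show ?case using start T by simp
  next
    case (Suc n)
    show ?case
      by (rule step[OF _ _ _ _ Suc]) (use h T in \<open>auto simp: algebra_simps\<close>)
  qed
  moreover obtain n where "T / h < real n" using reals_Archimedean2 by blast
  then have "min (real n * h) T = T" using h by (simp add: field_simps)
  ultimately show ?thesis by metis
qed

section \<open>Picard iteration\<close>

text \<open>Only used for Hoelder paths, where the sewing lemma guarantees that the limit exists.\<close>

definition young_integral :: "(real \<Rightarrow> 'v \<Rightarrow> 'w::real_normed_vector) \<Rightarrow> (real \<Rightarrow> 'v) \<Rightarrow> real \<Rightarrow> real \<Rightarrow> 'w" where
  "young_integral A x s t = (SOME I. partition_sums_tendsto (young_germ A x) s t I)"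

context young_field
begin

lemma young_integral_tendsto:
  assumes x: "holder_on \<alpha> R a b x" and ab: "0 \<le> a" "b \<le> T" and R: "R \<ge> 0"
    and st: "a \<le> s" "s \<le> t" "t \<le> b"
  shows "partition_sums_tendsto (young_germ A x) s t (young_integral A x s t)"
proof -
  have "defect_le (\<alpha> + \<alpha>) (K * R) s t (young_germ A x)"
    using defect_le_mono[OF young_germ_defect[OF x ab R] st(1,3)] \<alpha> by simp
  moreover have "K * R \<ge> 0" using K R by simp
  ultimately have "\<exists>I. partition_sums_tendsto (young_germ A x) s t I"
    using sewing[OF two_\<alpha> _ _ st(2)] by blast
  then show ?thesis unfolding young_integral_def by (rule someI_ex)
qed

definition picard :: "real \<Rightarrow> 'v \<Rightarrow> (real \<Rightarrow> 'v) \<Rightarrow> real \<Rightarrow> 'v" where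
  "picard a \<xi> x t = \<xi> + young_integral A x a t"

lemma picard_start:
  assumes "holder_on \<alpha> R a b x" "0 \<le> a" "a \<le> b" "b \<le> T" "R \<ge> 0"
  shows "picard a \<xi> x a = \<xi>"
  using partition_sums_tendsto_point[OF young_integral_tendsto[OF assms(1,2,4,5), of a a]] assms(3)
  unfolding picard_def by simp

lemma picard_increment:
  assumes x: "holder_on \<alpha> R a b x" and ab: "0 \<le> a" "b \<le> T" and R: "R \<ge> 0"
    and st: "a \<le> s" "s \<le> t" "t \<le> b"
  shows "partition_sums_tendsto (young_germ A x) s t (picard a \<xi> x t - picard a \<xi> x s)"
  using partition_sums_tendsto_subinterval[OF st(1,2)
      young_integral_tendsto[OF x ab R, of a t] young_integral_tendsto[OF x ab R, of a s]] st
  unfolding picard_def by simp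

lemma picard_remainder:
  assumes x: "holder_on \<alpha> R a b x" and ab: "0 \<le> a" "b \<le> T" and R: "R \<ge> 0"
  shows "remainder_le (\<alpha> + \<alpha>) (sewing_constant (\<alpha> + \<alpha>) * (K * R)) a b (picard a \<xi> x) (young_germ A x)"
  using young_germ_defect[OF x ab R] picard_increment[OF x ab R] K R \<alpha>
  by (intro remainder_le_of_partition_sums_tendsto[OF two_\<alpha>]) auto

lemma picard_holder:
  assumes x: "holder_on \<alpha> (2 * K) a b x" and ab: "0 \<le> a" "a \<le> b" "b \<le> T" "b - a \<le> h"
    and small: "sewing_constant (\<alpha> + \<alpha>) * (K * (2 * K)) * h powr \<alpha> \<le> K"
  shows "holder_on \<alpha> (2 * K) a b (picard a \<xi> x)"
proof -
  let ?D = "sewing_constant (\<alpha> + \<alpha>) * (K * (2 * K))"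
  have D: "?D \<ge> 0" using sewing_constant_pos[OF two_\<alpha>] K by simp
  have "holder_on \<alpha> (K + ?D * (b - a) powr \<alpha>) a b (picard a \<xi> x)"
    using picard_remainder[OF x ab(1,3)] K \<alpha> D by (intro holder_on_of_remainder_le[OF ab(1,3)]) auto
  moreover have "?D * (b - a) powr \<alpha> \<le> ?D * h powr \<alpha>"
    using ab \<alpha> D by (intro mult_left_mono powr_mono2) auto
  then have "K + ?D * (b - a) powr \<alpha> \<le> 2 * K" using small by linarith
  ultimately show ?thesis by (rule holder_on_mono) simp_all
qed

lemma picard_iterates:
  fixes \<xi> :: 'v
  assumes ab: "0 \<le> a" "a \<le> b" "b \<le> T" "b - a \<le> h"
    and small: "sewing_constant (\<alpha> + \<alpha>) * (K * (2 * K)) * h powr \<alpha> \<le> K"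
    and contract: "contraction_factor h (2 * K) \<le> 1 / 2"
  defines "x \<equiv> \<lambda>k. (picard a \<xi> ^^ k) (\<lambda>_. \<xi>)"
  shows "holder_on \<alpha> (2 * K) a b (x k)" and "x k a = \<xi>"
    and "holder_on \<alpha> (2 * K / 2 ^ k) a b (\<lambda>t. x (Suc k) t - x k t)"
proof -
  have x_Suc: "x (Suc k) = picard a \<xi> (x k)" for k unfolding x_def by simp
  have K2: "2 * K \<ge> 0" using K by simp
  show ball: "holder_on \<alpha> (2 * K) a b (x k)" for k
  proof (induction k)
    case 0
    then show ?case using K2 by (simp add: x_def holder_on_def)
  next
    case (Suc k)
    then show ?case unfolding x_Suc by (rule picard_holder[OF _ ab small])
  qed
  show start: "x k a = \<xi>" for k
    by (cases k) (simp_all add: x_def x_Suc[unfolded x_def] picard_start[OF ball[unfolded x_def] ab(1-3) K2])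
  show "holder_on \<alpha> (2 * K / 2 ^ k) a b (\<lambda>t. x (Suc k) t - x k t)" for k
  proof (induction k)
    case 0
    show ?case using ball[of 1] by (simp add: x_def holder_on_def)
  next
    case (Suc k)
    have "holder_on \<alpha> (2 * K / 2 ^ k * contraction_factor h (2 * K)) a b (\<lambda>t. x (Suc (Suc k)) t - x (Suc k) t)"
    proof (rule young_integral_difference_holder[OF ab K2 _ ball ball _ Suc.IH])
      show "0 \<le> 2 * K / 2 ^ k" using K by simp
      show "x (Suc k) a = x k a" using start by simp
      show "partition_sums_tendsto (young_germ A (x (Suc k))) s t (x (Suc (Suc k)) t - x (Suc (Suc k)) s)"
        if "a \<le> s" "s \<le> t" "t \<le> b" for s t
        unfolding x_Suc[of "Suc k"] using picard_increment[OF ball ab(1,3) K2 that] .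
      show "partition_sums_tendsto (young_germ A (x k)) s t (x (Suc k) t - x (Suc k) s)"
        if "a \<le> s" "s \<le> t" "t \<le> b" for s t
        unfolding x_Suc[of k] using picard_increment[OF ball ab(1,3) K2 that] .
    qed
    moreover have "2 * K / 2 ^ k * contraction_factor h (2 * K) \<le> 2 * K / 2 ^ Suc k"
      using mult_left_mono[OF contract, of "2 * K / 2 ^ k"] K by simp
    ultimately show ?case by (rule holder_on_mono) simp_all
  qed
qed

lemma young_germ_tendsto:
  assumes "(\<lambda>k. x k s) \<longlonglongrightarrow> y s" "0 \<le> s" "s \<le> t" "t \<le> T"
  shows "(\<lambda>k. young_germ A (x k) s t) \<longlonglongrightarrow> young_germ A y s t"
proof -
  have "isCont (A r) (y s)" if "0 \<le> r" "r \<le> T" for r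
    using has_derivative_continuous[OF A_deriv[OF that]] .
  then show ?thesis
    unfolding young_germ_def using assms by (intro tendsto_diff isCont_tendsto_compose[of _ "A _"]) auto
qed

lemma local_solution:
  assumes ab: "0 \<le> a" "a \<le> b" "b \<le> T" "b - a \<le> h"
    and small: "sewing_constant (\<alpha> + \<alpha>) * (K * (2 * K)) * h powr \<alpha> \<le> K"
    and contract: "contraction_factor h (2 * K) \<le> 1 / 2"
  obtains y where "y a = \<xi>"
    "remainder_le (\<alpha> + \<alpha>) (sewing_constant (\<alpha> + \<alpha>) * (K * (2 * K))) a b y (young_germ A y)"
proof -
  define x where "x k = (picard a \<xi> ^^ k) (\<lambda>_. \<xi>)" for k
  note iterates = picard_iterates[OF ab small contract, where \<xi> = \<xi>, folded x_def]
  define y where "y t = lim (\<lambda>k. x k t)" for t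
  have lim: "(\<lambda>k. x k t) \<longlonglongrightarrow> y t" if "a \<le> t" "t \<le> b" for t
    using holder_on_geometric_convergent[OF iterates(3) iterates(2) that]
    unfolding y_def by (simp add: convergent_LIMSEQ_iff)
  have "y a = \<xi>"
    using lim[of a] ab iterates(2) LIMSEQ_unique[OF _ tendsto_const] by simp
  moreover have "remainder_le (\<alpha> + \<alpha>) (sewing_constant (\<alpha> + \<alpha>) * (K * (2 * K))) a b y (young_germ A y)"
    unfolding remainder_le_def
  proof (intro allI impI)
    fix s t assume st: "a \<le> s" "s \<le> t" "t \<le> b"
    have "(\<lambda>k. norm (x (Suc k) t - x (Suc k) s - young_germ A (x k) s t))
        \<longlonglongrightarrow> norm (y t - y s - young_germ A y s t)"
      using st ab by (intro tendsto_intros LIMSEQ_Suc lim young_germ_tendsto) auto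
    moreover have "norm (x (Suc k) t - x (Suc k) s - young_germ A (x k) s t)
        \<le> sewing_constant (\<alpha> + \<alpha>) * (K * (2 * K)) * (t - s) powr (\<alpha> + \<alpha>)" for k
      using remainder_leD[OF picard_remainder[OF iterates(1) ab(1,3)] st] K by (simp add: x_def)
    ultimately show "norm (y t - y s - young_germ A y s t)
        \<le> sewing_constant (\<alpha> + \<alpha>) * (K * (2 * K)) * (t - s) powr (\<alpha> + \<alpha>)"
      by (intro LIMSEQ_le_const2) auto
  qed
  ultimately show thesis by (rule that)
qed

section \<open>Global existence and uniqueness\<close>

lemma remainder_le_glue:
  assumes ab: "0 \<le> c" "c \<le> a" "a \<le> b" "b \<le> T" and D: "D \<ge> 0" "D' \<ge> 0" and L: "L \<ge> 0"
    and x: "remainder_le (\<alpha> + \<alpha>) D c a x (young_germ A x)" and x_holder: "holder_on \<alpha> L c a x"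
    and y: "remainder_le (\<alpha> + \<alpha>) D' a b y (young_germ A y)" and match: "y a = x a"
  defines "z \<equiv> \<lambda>t. if t \<le> a then x t else y t"
  shows "remainder_le (\<alpha> + \<alpha>) (D + D' + K * L) c b z (young_germ A z)"
  unfolding remainder_le_def
proof (intro allI impI)
  fix s t assume st: "c \<le> s" "s \<le> t" "t \<le> b"
  let ?E = "D + D' + K * L" and ?p = "(t - s) powr (\<alpha> + \<alpha>)"
  have mono: "M * (v - u) powr (\<alpha> + \<alpha>) \<le> M * ?p" if "M \<ge> 0" "s \<le> u" "u \<le> v" "v \<le> t" for M u v
    using that \<alpha> by (intro mult_left_mono powr_mono2) auto
  consider "t \<le> a" | "a \<le> s" | "s < a" "a < t" by linarith
  then show "norm (z t - z s - young_germ A z s t) \<le> ?E * ?p"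
  proof cases
    case 1
    then have "norm (z t - z s - young_germ A z s t) \<le> D * ?p"
      using remainder_leD[OF x st(1,2) 1] st unfolding z_def young_germ_def by simp
    then show ?thesis using D K L by (smt (verit) mult_right_mono mult_nonneg_nonneg powr_ge_zero)
  next
    case 2
    have "z u = y u" if "a \<le> u" for u using match that unfolding z_def by simp
    then have "norm (z t - z s - young_germ A z s t) \<le> D' * ?p"
      using remainder_leD[OF y 2 st(2,3)] 2 st unfolding young_germ_def by simp
    then show ?thesis using D K L by (smt (verit) mult_right_mono mult_nonneg_nonneg powr_ge_zero)
  next
    case 3
    have "z t - z s - young_germ A z s t = (y t - y a - young_germ A y a t) + (x a - x s - young_germ A x s a)
        + ((A t (x a) - A a (x a)) - (A t (x s) - A a (x s)))"
      using 3 match unfolding z_def young_germ_def by (simp add: algebra_simps)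
    moreover have "norm (y t - y a - young_germ A y a t) \<le> D' * (t - a) powr (\<alpha> + \<alpha>)"
      using remainder_leD[OF y order_refl _ st(3)] 3 by simp
    moreover have "D' * (t - a) powr (\<alpha> + \<alpha>) \<le> D' * ?p" using 3 by (intro mono[OF D(2)]) auto
    moreover have "norm (x a - x s - young_germ A x s a) \<le> D * (a - s) powr (\<alpha> + \<alpha>)"
      using remainder_leD[OF x st(1) _ order_refl] 3 by simp
    moreover have "D * (a - s) powr (\<alpha> + \<alpha>) \<le> D * ?p" using 3 by (intro mono[OF D(1)]) auto
    moreover have "norm ((A t (x a) - A a (x a)) - (A t (x s) - A a (x s))) \<le> K * L * ?p"
      using holder_onD[OF x_holder st(1), of a] ab st 3 L
      by (intro increment_lipschitz_holder) (auto simp: norm_minus_commute)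
    ultimately show ?thesis
      by (smt (verit) distrib_right norm_triangle_ineq)
  qed
qed

lemma exists_step_size:
  assumes "R \<ge> 0"
  obtains h where "h > 0" "sewing_constant (\<alpha> + \<alpha>) * (K * R) * h powr \<alpha> \<le> K"
    "contraction_factor h R \<le> 1 / 2"
proof -
  have "((\<lambda>h. sewing_constant (\<alpha> + \<alpha>) * (K * R) * h powr \<alpha>) \<longlongrightarrow> sewing_constant (\<alpha> + \<alpha>) * (K * R) * 0)
      (at_right 0)"
    using \<alpha> by (intro tendsto_intros powr_tendsto_zero_at_right)
  then have "eventually (\<lambda>h. sewing_constant (\<alpha> + \<alpha>) * (K * R) * h powr \<alpha> < K) (at_right 0)"
    using K by (auto dest: order_tendstoD)
  moreover have "eventually (\<lambda>h. contraction_factor h R < 1 / 2) (at_right 0)"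
    by (rule eventually_contraction_factor_less) simp
  ultimately have "eventually (\<lambda>h. sewing_constant (\<alpha> + \<alpha>) * (K * R) * h powr \<alpha> < K
      \<and> contraction_factor h R < 1 / 2) (at_right 0)"
    by (rule eventually_conj)
  then have "eventually (\<lambda>h. h > 0 \<and> sewing_constant (\<alpha> + \<alpha>) * (K * R) * h powr \<alpha> < K
      \<and> contraction_factor h R < 1 / 2) (at_right 0)"
    by (rule eventually_conj[OF eventually_at_right_less])
  then show thesis
    using eventually_happens'[OF trivial_limit_at_right_real] that by force
qed

lemma exists_remainder_solution:
  obtains x D where "D \<ge> 0" "x 0 = x0" "remainder_le (\<alpha> + \<alpha>) D 0 T x (young_germ A x)"
proof -
  obtain h where h: "h > 0" "sewing_constant (\<alpha> + \<alpha>) * (K * (2 * K)) * h powr \<alpha> \<le> K"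
    "contraction_factor h (2 * K) \<le> 1 / 2"
    using exists_step_size[of "2 * K"] K by auto
  let ?D' = "sewing_constant (\<alpha> + \<alpha>) * (K * (2 * K))"
  have D': "?D' \<ge> 0" using sewing_constant_pos[OF two_\<alpha>] K by simp
  have "\<exists>x D. D \<ge> 0 \<and> x 0 = x0 \<and> remainder_le (\<alpha> + \<alpha>) D 0 T x (young_germ A x)"
  proof (induction rule: real_interval_step_induct[OF h(1), where
        P = "\<lambda>c. \<exists>x D. D \<ge> 0 \<and> x 0 = x0 \<and> remainder_le (\<alpha> + \<alpha>) D 0 c x (young_germ A x)"])
    have "remainder_le (\<alpha> + \<alpha>) 0 0 0 (\<lambda>_. x0) (young_germ A (\<lambda>_. x0))"
      unfolding remainder_le_def
    proof (intro allI impI)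
      fix s t :: real assume "0 \<le> s" "s \<le> t" "t \<le> 0"
      then have "s = t" by simp
      then show "norm (x0 - x0 - young_germ A (\<lambda>_. x0) s t) \<le> 0 * (t - s) powr (\<alpha> + \<alpha>)"
        by (simp add: young_germ_def)
    qed
    then show "\<exists>x D. D \<ge> 0 \<and> x 0 = x0 \<and> remainder_le (\<alpha> + \<alpha>) D 0 0 x (young_germ A x)"
      by (intro exI[of _ "\<lambda>_. x0"] exI[of _ 0]) simp
  next
    fix a b assume ab: "0 \<le> a" "a \<le> b" "b \<le> T" "b - a \<le> h"
    assume "\<exists>x D. D \<ge> 0 \<and> x 0 = x0 \<and> remainder_le (\<alpha> + \<alpha>) D 0 a x (young_germ A x)"
    then obtain x D where x: "D \<ge> 0" "x 0 = x0" "remainder_le (\<alpha> + \<alpha>) D 0 a x (young_germ A x)"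
      by blast
    obtain y where y: "y a = x a" "remainder_le (\<alpha> + \<alpha>) ?D' a b y (young_germ A y)"
      using local_solution[OF ab h(2,3), of "x a"] by blast
    have L: "K + D * a powr \<alpha> \<ge> 0" using K x(1) by simp
    have "holder_on \<alpha> (K + D * (a - 0) powr \<alpha>) 0 a x"
      using \<alpha> ab by (intro holder_on_of_remainder_le[OF order_refl _ x(1) _ x(3)]) simp_all
    then have "remainder_le (\<alpha> + \<alpha>) (D + ?D' + K * (K + D * a powr \<alpha>)) 0 b
        (\<lambda>t. if t \<le> a then x t else y t) (young_germ A (\<lambda>t. if t \<le> a then x t else y t))"
      using remainder_le_glue[OF order_refl ab(1-3) x(1) D' L x(3) _ y(2,1)] by simp
    moreover have "D + ?D' + K * (K + D * a powr \<alpha>) \<ge> 0" using x(1) D' K L by simp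
    ultimately show "\<exists>x D. D \<ge> 0 \<and> x 0 = x0 \<and> remainder_le (\<alpha> + \<alpha>) D 0 b x (young_germ A x)"
      using x(2) ab by (intro exI[of _ "\<lambda>t. if t \<le> a then x t else y t"] exI[of _ "D + ?D' + K * (K + D * a powr \<alpha>)"]) simp
  qed (use T in simp)
  then show thesis using that by blast
qed

lemma YDE_solution_increment:
  assumes sol: "YDE_solution T \<alpha> \<beta> A x0 y" and st: "0 \<le> s" "s \<le> t" "t \<le> T"
  shows "partition_sums_tendsto (young_germ A y) s t (y t - y s)"
proof -
  have "partition_sums_tendsto (young_germ A y) 0 r (y r - x0)" if "0 \<le> r" "r \<le> T" for r
    using sol that unfolding YDE_solution_def has_young_integral_iff by simp
  then have "partition_sums_tendsto (young_germ A y) s t ((y t - x0) - (y s - x0))"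
    using st by (intro partition_sums_tendsto_subinterval[OF st(1,2)]) simp_all
  then show ?thesis by simp
qed

lemma YDE_solution_start: "YDE_solution T \<alpha> \<beta> A x0 y \<Longrightarrow> y 0 = x0"
  using partition_sums_tendsto_point[of "young_germ A y" 0 "y 0 - x0"] T
  unfolding YDE_solution_def has_young_integral_iff by simp

lemma YDE_solution_holder:
  assumes sol: "YDE_solution T \<alpha> \<beta> A x0 y"
  obtains R where "R \<ge> 0" "holder_on \<alpha> R 0 T y"
proof -
  obtain \<gamma> where \<gamma>: "\<alpha> + \<beta> * \<gamma> > 1" "holder_path T \<gamma> y"
    using sol unfolding YDE_solution_def by blast
  have "\<gamma> > 0"
  proof (rule ccontr)
    assume "\<not> \<gamma> > 0"
    then have "\<beta> * \<gamma> \<le> 0" using \<beta> by (simp add: mult_nonneg_nonpos)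
    then show False using \<gamma>(1) \<alpha> by simp
  qed
  then have "\<beta> * \<gamma> \<le> 1 * \<gamma>" using \<beta> by (intro mult_right_mono) auto
  then have \<alpha>\<gamma>: "\<alpha> + \<gamma> > 1" using \<gamma>(1) by simp
  obtain R where R: "R \<ge> 0" "holder_on \<gamma> R 0 T y"
    using holder_on_of_holder_path[OF \<gamma>(2)] .
  let ?D = "sewing_constant (\<alpha> + \<gamma>) * (K * R)"
  have D: "?D \<ge> 0" using sewing_constant_pos[OF \<alpha>\<gamma>] K R by simp
  have "remainder_le (\<alpha> + \<gamma>) ?D 0 T y (young_germ A y)"
  proof (rule remainder_le_of_partition_sums_tendsto[OF \<alpha>\<gamma>])
    show "0 \<le> K * R" using K R by simp
    show "defect_le (\<alpha> + \<gamma>) (K * R) 0 T (young_germ A y)"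
      using young_germ_defect[OF R(2) order_refl order_refl R(1)] \<open>\<gamma> > 0\<close> by simp
    show "partition_sums_tendsto (young_germ A y) s t (y t - y s)" if "0 \<le> s" "s \<le> t" "t \<le> T" for s t
      using YDE_solution_increment[OF sol that] .
  qed
  then have "holder_on \<alpha> (K + ?D * (T - 0) powr \<gamma>) 0 T y"
    using \<open>\<gamma> > 0\<close> by (intro holder_on_of_remainder_le[OF order_refl order_refl D]) simp_all
  moreover have "K + ?D * (T - 0) powr \<gamma> \<ge> 0" using K D by simp
  ultimately show thesis by (rule that[rotated])
qed

lemma solutions_agree_on_step:
  assumes ab: "0 \<le> a" "a \<le> b" "b \<le> T" "b - a \<le> h" and R: "R \<ge> 0"
    and contract: "contraction_factor h R \<le> 1 / 2"
    and x: "holder_on \<alpha> R a b x" and y: "holder_on \<alpha> R a b y" and start: "x a = y a"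
    and x_int: "\<And>s t. a \<le> s \<Longrightarrow> s \<le> t \<Longrightarrow> t \<le> b \<Longrightarrow> partition_sums_tendsto (young_germ A x) s t (x t - x s)"
    and y_int: "\<And>s t. a \<le> s \<Longrightarrow> s \<le> t \<Longrightarrow> t \<le> b \<Longrightarrow> partition_sums_tendsto (young_germ A y) s t (y t - y s)"
    and t: "a \<le> t" "t \<le> b"
  shows "x t = y t"
proof -
  have "holder_on \<alpha> (2 * R / 2 ^ k) a b (\<lambda>t. x t - y t)" for k
  proof (induction k)
    case 0
    show ?case unfolding holder_on_def
    proof (intro allI impI)
      fix s t assume st: "a \<le> s" "s \<le> t" "t \<le> b"
      have "norm ((x t - y t) - (x s - y s)) \<le> norm (x t - x s) + norm (y t - y s)"
        using norm_triangle_ineq4[of "x t - x s" "y t - y s"] by (simp add: algebra_simps)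
      then show "norm ((x t - y t) - (x s - y s)) \<le> 2 * R / 2 ^ 0 * (t - s) powr \<alpha>"
        using holder_onD[OF x st] holder_onD[OF y st] by simp
    qed
  next
    case (Suc k)
    have Z: "0 \<le> 2 * R / 2 ^ k" using R by simp
    have "holder_on \<alpha> (2 * R / 2 ^ k * contraction_factor h R) a b (\<lambda>t. x t - y t)"
      by (rule young_integral_difference_holder[OF ab R Z x y start Suc.IH x_int y_int])
    moreover have "2 * R / 2 ^ k * contraction_factor h R \<le> 2 * R / 2 ^ Suc k"
      using mult_left_mono[OF contract, of "2 * R / 2 ^ k"] R by simp
    ultimately show ?case by (rule holder_on_mono) simp_all
  qed
  then have "x t - y t = 0"
    by (rule holder_on_geometric_zero) (use start t in simp_all)
  then show ?thesis by simp
qed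

theorem YDE_solution_unique:
  assumes x: "YDE_solution T \<alpha> \<beta> A x0 x" and y: "YDE_solution T \<alpha> \<beta> A x0 y" and t: "0 \<le> t" "t \<le> T"
  shows "x t = y t"
proof -
  obtain Rx Ry where Rx: "Rx \<ge> 0" "holder_on \<alpha> Rx 0 T x" and Ry: "Ry \<ge> 0" "holder_on \<alpha> Ry 0 T y"
    using YDE_solution_holder[OF x] YDE_solution_holder[OF y] by metis
  define R where "R = max Rx Ry"
  have R: "R \<ge> 0" "holder_on \<alpha> R 0 T x" "holder_on \<alpha> R 0 T y"
    unfolding R_def using Rx Ry by (auto elim: holder_on_mono)
  obtain h where h: "h > 0" "contraction_factor h R \<le> 1 / 2"
    using exists_step_size[OF R(1)] by blast
  have "\<forall>t. 0 \<le> t \<longrightarrow> t \<le> T \<longrightarrow> x t = y t"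
  proof (induction rule: real_interval_step_induct[OF h(1), where P = "\<lambda>c. \<forall>t. 0 \<le> t \<longrightarrow> t \<le> c \<longrightarrow> x t = y t"])
    show "\<forall>t. 0 \<le> t \<longrightarrow> t \<le> 0 \<longrightarrow> x t = y t"
      using YDE_solution_start[OF x] YDE_solution_start[OF y] by auto
  next
    fix a b assume ab: "0 \<le> a" "a \<le> b" "b \<le> T" "b - a \<le> h"
      and IH: "\<forall>t. 0 \<le> t \<longrightarrow> t \<le> a \<longrightarrow> x t = y t"
    show "\<forall>t. 0 \<le> t \<longrightarrow> t \<le> b \<longrightarrow> x t = y t"
    proof (intro allI impI)
      fix t assume t: "0 \<le> t" "t \<le> b"
      show "x t = y t"
      proof (cases "t \<le> a")
        case False
        show ?thesis
        proof (rule solutions_agree_on_step[OF ab R(1) h(2)])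
          show "holder_on \<alpha> R a b x" "holder_on \<alpha> R a b y"
            using R ab by (auto elim: holder_on_mono)
          show "partition_sums_tendsto (young_germ A x) s r (x r - x s)"
            "partition_sums_tendsto (young_germ A y) s r (y r - y s)"
            if "a \<le> s" "s \<le> r" "r \<le> b" for s r
            using YDE_solution_increment[OF x] YDE_solution_increment[OF y] that ab by auto
        qed (use IH ab t False in auto)
      qed (use IH t in auto)
    qed
  qed (use T in simp)
  then show ?thesis using t by blast
qed

theorem YDE_solution_exists: "\<exists>x. YDE_solution T \<alpha> \<beta> A x0 x"
proof -
  obtain x D where D: "D \<ge> 0" and start: "x 0 = x0" and rem: "remainder_le (\<alpha> + \<alpha>) D 0 T x (young_germ A x)"
    using exists_remainder_solution .
  have "holder_on \<alpha> (K + D * (T - 0) powr \<alpha>) 0 T x"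
    using \<alpha> by (intro holder_on_of_remainder_le[OF order_refl order_refl D _ rem]) simp
  then have "holder_path T \<alpha> x"
    by (rule holder_path_of_holder_on) (use K D \<alpha> in simp_all)
  moreover have "\<alpha> + \<beta> * \<alpha> > 1" using \<alpha>\<beta> by (simp add: algebra_simps)
  moreover have "has_young_integral A x 0 t (x t - x0)" if "t \<in> {0..T}" for t
    unfolding has_young_integral_iff start[symmetric]
    using that by (intro partition_sums_tendsto_increment[OF two_\<alpha> D rem]) simp_all
  ultimately have "YDE_solution T \<alpha> \<beta> A x0 x"
    unfolding YDE_solution_def by blast
  then show ?thesis by blast
qed

end

lemma field_holder_bounds:
  assumes "field_holder T \<alpha> \<beta> F"
  obtains C where "C \<ge> 0"
    "\<And>s t x. 0 \<le> s \<Longrightarrow> s \<le> t \<Longrightarrow> t \<le> T \<Longrightarrow> norm (F t x - F s x) \<le> C * (t - s) powr \<alpha>"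
    "\<And>s t x y. 0 \<le> s \<Longrightarrow> s \<le> t \<Longrightarrow> t \<le> T \<Longrightarrow>
      norm ((F t x - F s x) - (F t y - F s y)) \<le> C * (t - s) powr \<alpha> * norm (x - y) powr \<beta>"
proof -
  obtain C where C: "\<forall>s\<in>{0..T}. \<forall>t\<in>{0..T}. s < t \<longrightarrow>
      (\<forall>x y. x \<noteq> y \<longrightarrow> norm ((F t x - F s x) - (F t y - F s y)) \<le> C * (t - s) powr \<alpha> * norm (x - y) powr \<beta>) \<and>
      (\<forall>x. norm (F t x - F s x) \<le> C * (t - s) powr \<alpha>)"
    using assms unfolding field_holder_def by (elim exE)
  have mono: "C * p \<le> max C 0 * p" if "p \<ge> 0" for p
    using that by (intro mult_right_mono) simp_all
  show thesis
  proof (rule that[of "max C 0"])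
    fix s t x assume st: "0 \<le> s" "s \<le> t" "t \<le> T"
    show "norm (F t x - F s x) \<le> max C 0 * (t - s) powr \<alpha>"
    proof (cases "s = t")
      case False
      then have "norm (F t x - F s x) \<le> C * (t - s) powr \<alpha>" using C st by simp
      then show ?thesis using mono[of "(t - s) powr \<alpha>"] by simp
    qed simp
  next
    fix s t x y assume st: "0 \<le> s" "s \<le> t" "t \<le> T"
    show "norm ((F t x - F s x) - (F t y - F s y)) \<le> max C 0 * (t - s) powr \<alpha> * norm (x - y) powr \<beta>"
    proof (cases "s = t \<or> x = y")
      case False
      then have "norm ((F t x - F s x) - (F t y - F s y)) \<le> C * ((t - s) powr \<alpha> * norm (x - y) powr \<beta>)"
        using C st by (simp add: mult.assoc)
      then show ?thesis using mono[of "(t - s) powr \<alpha> * norm (x - y) powr \<beta>"] by (simp add: mult.assoc)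
    qed auto
  qed simp
qed

lemma young_field_of_field_holder_1:
  fixes A :: "real \<Rightarrow> 'v::banach \<Rightarrow> 'v"
  assumes "T > 0" "0 < \<alpha>" "\<alpha> < 1" "0 < \<beta>" "\<beta> < 1" "\<alpha> * (1 + \<beta>) > 1"
    and "field_holder_1 T \<alpha> \<beta> A"
  obtains DA K where "young_field T \<alpha> \<beta> A DA K"
proof -
  have A: "field_holder T \<alpha> \<beta> A" and "\<exists>DA :: real \<Rightarrow> 'v \<Rightarrow> 'v \<Rightarrow>\<^sub>L 'v.
      (\<forall>t\<in>{0..T}. \<forall>x. (A t has_derivative blinfun_apply (DA t x)) (at x)) \<and> field_holder T \<alpha> \<beta> DA"
    using assms(7) unfolding field_holder_1_def by simp_all
  then obtain DA :: "real \<Rightarrow> 'v \<Rightarrow> 'v \<Rightarrow>\<^sub>L 'v" where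
    deriv: "\<forall>t\<in>{0..T}. \<forall>x. (A t has_derivative blinfun_apply (DA t x)) (at x)"
    and DA: "field_holder T \<alpha> \<beta> DA"
    by blast
  obtain CA where CA: "CA \<ge> 0"
    "\<And>s t x. 0 \<le> s \<Longrightarrow> s \<le> t \<Longrightarrow> t \<le> T \<Longrightarrow> norm (A t x - A s x) \<le> CA * (t - s) powr \<alpha>"
    "\<And>s t x y. 0 \<le> s \<Longrightarrow> s \<le> t \<Longrightarrow> t \<le> T \<Longrightarrow>
      norm ((A t x - A s x) - (A t y - A s y)) \<le> CA * (t - s) powr \<alpha> * norm (x - y) powr \<beta>"
    by (rule field_holder_bounds[OF A]) (rule that)
  obtain CD where CD: "CD \<ge> 0"
    "\<And>s t x. 0 \<le> s \<Longrightarrow> s \<le> t \<Longrightarrow> t \<le> T \<Longrightarrow> norm (DA t x - DA s x) \<le> CD * (t - s) powr \<alpha>"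
    "\<And>s t x y. 0 \<le> s \<Longrightarrow> s \<le> t \<Longrightarrow> t \<le> T \<Longrightarrow>
      norm ((DA t x - DA s x) - (DA t y - DA s y)) \<le> CD * (t - s) powr \<alpha> * norm (x - y) powr \<beta>"
    by (rule field_holder_bounds[OF DA]) (rule that)
  define K where "K = CA + CD + 1"
  have K: "K > 0" "CA \<le> K" "CD \<le> K" unfolding K_def using CA(1) CD(1) by simp_all
  have "young_field T \<alpha> \<beta> A DA K"
  proof (unfold_locales)
    fix s t x y assume st: "0 \<le> s" "s \<le> t" "t \<le> T"
    show "norm (A t x - A s x) \<le> K * (t - s) powr \<alpha>"
      by (rule order_trans[OF CA(2)[OF st] mult_right_mono[OF K(2)]]) simp
    show "norm (DA t x - DA s x) \<le> K * (t - s) powr \<alpha>"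
      by (rule order_trans[OF CD(2)[OF st] mult_right_mono[OF K(3)]]) simp
    show "norm ((DA t x - DA s x) - (DA t y - DA s y)) \<le> K * (t - s) powr \<alpha> * norm (x - y) powr \<beta>"
      using CD(3)[OF st, of x y] mult_right_mono[OF K(3), of "(t - s) powr \<alpha> * norm (x - y) powr \<beta>"]
      by (simp add: mult.assoc)
  next
    fix t x assume "0 \<le> t" "t \<le> T"
    then show "(A t has_derivative blinfun_apply (DA t x)) (at x)" using deriv by simp
  qed (use assms(1-6) K(1) in simp_all)
  then show thesis by (rule that)
qed

theorem mainTheorem2:
  fixes T \<alpha> \<beta> :: real and A :: "real \<Rightarrow> 'v::banach \<Rightarrow> 'v" and x0 :: 'v
  assumes "T > 0"
    and "separable_space TYPE('v)"
    and "0 < \<alpha>" "\<alpha> < 1" "0 < \<beta>" "\<beta> < 1" "\<alpha> * (1 + \<beta>) > 1"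
    and "field_holder_1 T \<alpha> \<beta> A"
  shows "\<exists>x. YDE_solution T \<alpha> \<beta> A x0 x \<and>
           (\<forall>y. YDE_solution T \<alpha> \<beta> A x0 y \<longrightarrow> (\<forall>t\<in>{0..T}. y t = x t))"
proof -
  obtain DA K where "young_field T \<alpha> \<beta> A DA K"
    using young_field_of_field_holder_1[OF assms(1,3-8)] .
  then interpret young_field T \<alpha> \<beta> A DA K .
  obtain x where x: "YDE_solution T \<alpha> \<beta> A x0 x"
    using YDE_solution_exists by blast
  have "y t = x t" if "YDE_solution T \<alpha> \<beta> A x0 y" "t \<in> {0..T}" for y t
    using YDE_solution_unique[OF that(1) x] that(2) by simp
  with x show ?thesis by blast
qed

end
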